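(* Let $(E,\|\cdot\|)$ be a normed space over $K$ and let $A$ be a local compactoid in $E$. If the linear span $[A]$, with the norm restricted from $E$, is a Banach space, then $A$ is the sum of a compactoid and a space of finite type, i.e. $A=B+D$ for some compactoid $B\subseteq E$ and some linear subspace $D\subseteq E$ which, with the induced topology, is of finite type.
   Context: $K$ is a field complete with respect to a non-trivial non-archimedean absolute value, $B_K=\{x\in K:|x|\le1\}$; norms and seminorms are non-archimedean. Absolutely convex = $B_K$-submodule; $[X]$ is the linear span and $\mathrm{aco}\,X$ the absolutely convex hull. A compactoid is an absolutely convex $B$ such that for every zero neighbourhood $U$ there is a finite $S$ with $B\subseteq U+\mathrm{aco}\,S$. A local compactoid in $E$ is an absolutely convex $A$ such that for every zero neighbourhood $U$ there is a finite $S\subseteq E$ with $A\subseteq U+[S]$. A locally convex space $D$ is of finite type if for every continuous seminorm $p$ on $D$, the normed space $D/\{p=0\}$ is finite-dimensional. *)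

theory Defs
  imports "HOL-Analysis.Analysis"
begin

definition nonarch_abs :: "('k::field \<Rightarrow> real) \<Rightarrow> bool" where
  "nonarch_abs v \<longleftrightarrow>
     (\<forall>x. v x \<ge> 0) \<and> (\<forall>x. v x = 0 \<longleftrightarrow> x = 0) \<and>
     (\<forall>x y. v (x * y) = v x * v y) \<and>
     (\<forall>x y. v (x + y) \<le> max (v x) (v y))"

definition nontrivial_abs :: "('k::field \<Rightarrow> real) \<Rightarrow> bool" where
  "nontrivial_abs v \<longleftrightarrow> (\<exists>x. x \<noteq> 0 \<and> v x \<noteq> 1)"

definition complete_abs :: "('k::field \<Rightarrow> real) \<Rightarrow> bool" where
  "complete_abs v \<longleftrightarrow>
     (\<forall>f :: nat \<Rightarrow> 'k.
        (\<forall>e>0. \<exists>M. \<forall>m\<ge>M. \<forall>n\<ge>M. v (f m - f n) < e) \<longrightarrow>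
        (\<exists>l. \<forall>e>0. \<exists>M. \<forall>n\<ge>M. v (f n - l) < e))"

definition nonarch_norm ::
  "('k::field \<Rightarrow> real) \<Rightarrow> ('k \<Rightarrow> 'e::ab_group_add \<Rightarrow> 'e) \<Rightarrow> ('e \<Rightarrow> real) \<Rightarrow> bool" where
  "nonarch_norm v sc N \<longleftrightarrow>
     (\<forall>x. N x \<ge> 0) \<and> (\<forall>x. N x = 0 \<longleftrightarrow> x = 0) \<and>
     (\<forall>a x. N (sc a x) = v a * N x) \<and>
     (\<forall>x y. N (x + y) \<le> max (N x) (N y))"

definition nonarch_seminorm_on ::
  "('k::field \<Rightarrow> real) \<Rightarrow> ('k \<Rightarrow> 'e::ab_group_add \<Rightarrow> 'e) \<Rightarrow> 'e set \<Rightarrow> ('e \<Rightarrow> real) \<Rightarrow> bool" where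
  "nonarch_seminorm_on v sc D p \<longleftrightarrow>
     (\<forall>x\<in>D. p x \<ge> 0) \<and>
     (\<forall>a. \<forall>x\<in>D. p (sc a x) = v a * p x) \<and>
     (\<forall>x\<in>D. \<forall>y\<in>D. p (x + y) \<le> max (p x) (p y))"

definition continuous_on_norm :: "('e::ab_group_add \<Rightarrow> real) \<Rightarrow> 'e set \<Rightarrow> ('e \<Rightarrow> real) \<Rightarrow> bool" where
  "continuous_on_norm N D p \<longleftrightarrow>
     (\<forall>x\<in>D. \<forall>e>0. \<exists>d>0. \<forall>y\<in>D. N (y - x) < d \<longrightarrow> \<bar>p y - p x\<bar> < e)"

definition abs_convex ::
  "('k::field \<Rightarrow> real) \<Rightarrow> ('k \<Rightarrow> 'e::ab_group_add \<Rightarrow> 'e) \<Rightarrow> 'e set \<Rightarrow> bool" where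
  "abs_convex v sc A \<longleftrightarrow>
     0 \<in> A \<and> (\<forall>x\<in>A. \<forall>y\<in>A. x + y \<in> A) \<and> (\<forall>a x. v a \<le> 1 \<and> x \<in> A \<longrightarrow> sc a x \<in> A)"

definition aco ::
  "('k::field \<Rightarrow> real) \<Rightarrow> ('k \<Rightarrow> 'e::ab_group_add \<Rightarrow> 'e) \<Rightarrow> 'e set \<Rightarrow> 'e set" where
  "aco v sc S = (abs_convex v sc) hull S"

definition msum :: "'e::ab_group_add set \<Rightarrow> 'e set \<Rightarrow> 'e set" where
  "msum A B = {a + b | a b. a \<in> A \<and> b \<in> B}"

definition zero_nhd :: "('e::ab_group_add \<Rightarrow> real) \<Rightarrow> 'e set \<Rightarrow> bool" where
  "zero_nhd N U \<longleftrightarrow> (\<exists>e>0. {x. N x < e} \<subseteq> U)"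

definition compactoid ::
  "('k::field \<Rightarrow> real) \<Rightarrow> ('k \<Rightarrow> 'e::ab_group_add \<Rightarrow> 'e) \<Rightarrow> ('e \<Rightarrow> real) \<Rightarrow> 'e set \<Rightarrow> bool" where
  "compactoid v sc N B \<longleftrightarrow> abs_convex v sc B \<and>
     (\<forall>U. zero_nhd N U \<longrightarrow> (\<exists>S. finite S \<and> B \<subseteq> msum U (aco v sc S)))"

definition local_compactoid ::
  "('k::field \<Rightarrow> real) \<Rightarrow> ('k \<Rightarrow> 'e::ab_group_add \<Rightarrow> 'e) \<Rightarrow> ('e \<Rightarrow> real) \<Rightarrow> 'e set \<Rightarrow> bool" where
  "local_compactoid v sc N A \<longleftrightarrow> abs_convex v sc A \<and>
     (\<forall>U. zero_nhd N U \<longrightarrow> (\<exists>S. finite S \<and> A \<subseteq> msum U (module.span sc S)))"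

definition complete_wrt :: "('e::ab_group_add \<Rightarrow> real) \<Rightarrow> 'e set \<Rightarrow> bool" where
  "complete_wrt N X \<longleftrightarrow>
     (\<forall>f :: nat \<Rightarrow> 'e. (\<forall>n. f n \<in> X) \<longrightarrow>
        (\<forall>e>0. \<exists>M. \<forall>m\<ge>M. \<forall>n\<ge>M. N (f m - f n) < e) \<longrightarrow>
        (\<exists>l\<in>X. \<forall>e>0. \<exists>M. \<forall>n\<ge>M. N (f n - l) < e))"

text \<open>D (with topology induced by N) is of finite type: for every continuous seminorm p on D,
  D / {p = 0} is finite-dimensional, i.e. D is spanned modulo the kernel of p by finitely many vectors.\<close>
definition finite_type ::
  "('k::field \<Rightarrow> real) \<Rightarrow> ('k \<Rightarrow> 'e::ab_group_add \<Rightarrow> 'e) \<Rightarrow> ('e \<Rightarrow> real) \<Rightarrow> 'e set \<Rightarrow> bool" where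
  "finite_type v sc N D \<longleftrightarrow>
     (\<forall>p. nonarch_seminorm_on v sc D p \<and> continuous_on_norm N D p \<longrightarrow>
        (\<exists>S. finite S \<and> S \<subseteq> D \<and> D \<subseteq> msum (module.span sc S) {x\<in>D. p x = 0}))"

end

theory Submission
  imports Defs
begin

text \<open>
  A local compactoid \<open>A\<close> whose span is complete spans a finite-dimensional space: otherwise one
  can build a convergent series in \<open>span A\<close> whose \<open>k\<close>-th increment is far from the
  finite-dimensional spaces approximating \<open>A\<close> at scale \<open>v \<pi>\<^sup>k\<close>, and then no multiple of its sum
  lies in \<open>A\<close>.

  In finite dimension we use a \<open>t\<close>-orthogonal basis, with respect to which coordinates are bounded
  by the norm. \<open>A\<close> contains a ball of \<open>span A\<close>, and induction on the basis shows that \<open>A\<close> lies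
  within bounded distance of its lineality space \<open>D = {d. K d \<subseteq> A}\<close>: if a coordinate is unbounded
  on \<open>A\<close>, completeness of the span of the other basis vectors yields a whole line of \<open>A\<close> in that
  direction. Then \<open>A = B + D\<close> for the bounded part \<open>B\<close> of \<open>A\<close>, which is a compactoid because its
  coordinates are bounded, while \<open>D\<close> is finite-dimensional and hence of finite type.
\<close>

locale nonarch_normed_space = vector_space sc
  for sc :: "'k::field \<Rightarrow> 'e::ab_group_add \<Rightarrow> 'e" +
  fixes v :: "'k \<Rightarrow> real" and N :: "'e \<Rightarrow> real"
  assumes nonarch_abs: "nonarch_abs v" and nonarch_norm: "nonarch_norm v sc N"
begin

lemma v_nonneg: "0 \<le> v a"
  and v_eq_0_iff [simp]: "v a = 0 \<longleftrightarrow> a = 0"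
  and v_mult: "v (a * b) = v a * v b"
  using nonarch_abs unfolding nonarch_abs_def by auto

lemma v_zero [simp]: "v 0 = 0"
  by simp

lemma v_pos: "a \<noteq> 0 \<Longrightarrow> 0 < v a"
  using v_nonneg[of a] by (simp add: order_less_le)

lemma v_one [simp]: "v 1 = 1"
  using v_mult[of 1 1] by simp

lemma v_inverse: "v (inverse a) = inverse (v a)"
proof (cases "a = 0")
  case False
  then have "v a * v (inverse a) = 1"
    by (simp flip: v_mult)
  then show ?thesis
    by (simp add: inverse_unique)
qed simp

lemma v_minus [simp]: "v (- a) = v a"
proof -
  have "v (-1) * v (-1) = 1"
    by (simp flip: v_mult)
  then have "v (-1) = 1"
    using v_nonneg[of "-1"] by (metis abs_of_nonneg abs_square_eq_1 mult.commute power2_eq_square)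
  then show ?thesis
    using v_mult[of "-1" a] by simp
qed

lemma v_divide: "v (a / b) = v a / v b"
  by (simp add: divide_inverse v_mult v_inverse)

lemma v_power: "v (a ^ n) = v a ^ n"
  by (induct n) (simp_all add: v_mult)

lemma N_nonneg: "0 \<le> N x"
  and N_eq_0_iff [simp]: "N x = 0 \<longleftrightarrow> x = 0"
  and N_scale: "N (sc a x) = v a * N x"
  and N_add_le_max: "N (x + y) \<le> max (N x) (N y)"
  using nonarch_norm unfolding nonarch_norm_def by auto

lemma N_zero [simp]: "N 0 = 0"
  by simp

lemma N_pos: "x \<noteq> 0 \<Longrightarrow> 0 < N x"
  using N_nonneg[of x] by (simp add: order_less_le)

lemma N_minus [simp]: "N (- x) = N x"
  using N_scale[of "-1" x] by simp

lemma N_minus_commute: "N (x - y) = N (y - x)"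
  by (metis minus_diff_eq N_minus)

lemma N_diff_le_max: "N (x - y) \<le> max (N x) (N y)"
  using N_add_le_max[of x "- y"] by simp

lemma N_diff_triangle: "N (x - z) \<le> max (N (x - y)) (N (y - z))"
  using N_add_le_max[of "x - y" "y - z"] by simp

lemma N_add_eq_left:
  assumes "N y < N x"
  shows "N (x + y) = N x"
proof -
  have "N x \<le> max (N (x + y)) (N y)"
    using N_diff_le_max[of "x + y" y] by simp
  then show ?thesis
    using N_add_le_max[of x y] assms by auto
qed

lemma N_sum_less:
  assumes "0 < M" and "\<And>i. i \<in> I \<Longrightarrow> N (f i) < M"
  shows "N (sum f I) < M"
  using assms(2)
proof (induct I rule: infinite_finite_induct)
  case (insert i I)
  then show ?case
    using order_le_less_trans[OF N_add_le_max[of "f i" "sum f I"]] by simp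
qed (use assms(1) in simp_all)

definition N_Cauchy :: "(nat \<Rightarrow> 'e) \<Rightarrow> bool" where
  "N_Cauchy u \<longleftrightarrow> (\<forall>e>0. \<exists>M. \<forall>m\<ge>M. \<forall>n\<ge>M. N (u m - u n) < e)"

definition N_tendsto :: "(nat \<Rightarrow> 'e) \<Rightarrow> 'e \<Rightarrow> bool" where
  "N_tendsto u l \<longleftrightarrow> (\<forall>e>0. \<exists>M. \<forall>n\<ge>M. N (u n - l) < e)"

lemma complete_wrt_iff:
  "complete_wrt N X \<longleftrightarrow> (\<forall>u. (\<forall>n. u n \<in> X) \<longrightarrow> N_Cauchy u \<longrightarrow> (\<exists>l\<in>X. N_tendsto u l))"
  unfolding complete_wrt_def N_Cauchy_def N_tendsto_def by blast

lemma complete_wrtD: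
  "complete_wrt N X \<Longrightarrow> (\<And>n. u n \<in> X) \<Longrightarrow> N_Cauchy u \<Longrightarrow> \<exists>l\<in>X. N_tendsto u l"
  unfolding complete_wrt_iff by blast

lemma N_tendsto_iff: "N_tendsto u l \<longleftrightarrow> (\<lambda>n. N (u n - l)) \<longlonglongrightarrow> 0"
  unfolding N_tendsto_def lim_sequentially using N_nonneg by simp

lemma N_tendsto_Cauchy:
  assumes "N_tendsto u l"
  shows "N_Cauchy u"
  unfolding N_Cauchy_def
proof (intro allI impI)
  fix e :: real
  assume "0 < e"
  then obtain M where "\<And>n. M \<le> n \<Longrightarrow> N (u n - l) < e"
    using assms unfolding N_tendsto_def by blast
  then have "N (u m - u n) < e" if "M \<le> m" "M \<le> n" for m n
    using le_less_trans[OF N_diff_triangle[where x = "u m" and y = l and z = "u n"]]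
      N_minus_commute[of l "u n"] that by simp
  then show "\<exists>M. \<forall>m\<ge>M. \<forall>n\<ge>M. N (u m - u n) < e"
    by blast
qed

lemma N_tendsto_unique:
  assumes "N_tendsto u l" "N_tendsto u l'"
  shows "l = l'"
proof -
  have "(\<lambda>n. max (N (u n - l)) (N (u n - l'))) \<longlonglongrightarrow> max 0 0"
    using assms unfolding N_tendsto_iff by (intro tendsto_max)
  moreover have "N (l - l') \<le> max (N (u n - l)) (N (u n - l'))" for n
    using N_diff_triangle[where x = l and y = "u n" and z = l'] N_minus_commute[of l "u n"] by simp
  ultimately have "N (l - l') \<le> 0"
    by (intro LIMSEQ_le_const) auto
  then show ?thesis
    using N_nonneg[of "l - l'"] by simp
qed

lemma N_tendsto_tail_bound:
  assumes "N_tendsto u z" and "\<And>n. m \<le> n \<Longrightarrow> N (u n - u m) \<le> B"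
  shows "N (z - u m) \<le> B"
proof -
  have "(\<lambda>n. max (N (u n - z)) B) \<longlonglongrightarrow> max 0 B"
    using assms(1) unfolding N_tendsto_iff by (intro tendsto_max tendsto_const)
  moreover have "N (z - u m) \<le> max (N (u n - z)) B" if "m \<le> n" for n
    using N_diff_triangle[where x = z and y = "u n" and z = "u m"] assms(2)[OF that]
      N_minus_commute[of z "u n"] by auto
  ultimately have "N (z - u m) \<le> max 0 B"
    by (intro LIMSEQ_le_const) auto
  moreover have "0 \<le> B"
    using assms(2)[of m] N_nonneg[of 0] by simp
  ultimately show ?thesis
    by simp
qed

lemma N_telescope_bound:
  assumes "\<And>j. N (u (Suc j) - u j) \<le> q ^ j * C" and "0 \<le> q" "q \<le> 1" "0 \<le> C" and "m \<le> n"
  shows "N (u n - u m) \<le> q ^ m * C"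
  using assms(5)
proof (induct n rule: dec_induct)
  case (step n)
  have "q ^ n * C \<le> q ^ m * C"
    using assms(2-4) step(1) by (intro mult_right_mono power_decreasing) auto
  then show ?case
    using N_diff_triangle[where x = "u (Suc n)" and y = "u n" and z = "u m"] assms(1)[of n] step(3)
    by simp
qed (use assms(2,4) in simp)

lemma geometric_limit:
  assumes "complete_wrt N F" and "\<And>n. u n \<in> F"
    and incr: "\<And>j. N (u (Suc j) - u j) \<le> q ^ j * C" and q: "0 \<le> q" "q < 1"
  shows "\<exists>z\<in>F. \<forall>m. N (z - u m) \<le> q ^ m * C"
proof -
  have "0 \<le> C"
    using incr[of 0] N_nonneg[of "u 1 - u 0"] by simp
  then have tele: "N (u n - u m) \<le> q ^ m * C" if "m \<le> n" for m n
    using N_telescope_bound[OF incr q(1) _ _ that] q by simp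
  have "N_Cauchy u"
    unfolding N_Cauchy_def
  proof (intro allI impI)
    fix e :: real
    assume "0 < e"
    have "(\<lambda>m. q ^ m * C) \<longlonglongrightarrow> 0"
      using q by (intro tendsto_mult_left_zero LIMSEQ_power_zero) simp
    then have "\<forall>\<^sub>F m in sequentially. q ^ m * C < e"
      using \<open>0 < e\<close> by (rule order_tendstoD(2))
    then obtain M where M: "\<And>m. M \<le> m \<Longrightarrow> q ^ m * C < e"
      unfolding eventually_sequentially by auto
    have "N (u m - u n) < e" if "M \<le> m" "M \<le> n" for m n
      using tele[of m n] tele[of n m] M that N_minus_commute[of "u m" "u n"]
      by (cases "m \<le> n") fastforce+
    then show "\<exists>M. \<forall>m\<ge>M. \<forall>n\<ge>M. N (u m - u n) < e"
      by blast
  qed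
  then obtain z where "z \<in> F" "N_tendsto u z"
    using complete_wrtD assms(1,2) by blast
  then show ?thesis
    using N_tendsto_tail_bound tele by blast
qed

lemma N_tendsto_sum_scale:
  assumes "finite I" "\<And>b. b \<in> I \<Longrightarrow> \<forall>e>0. \<exists>M. \<forall>n\<ge>M. v (\<alpha> n b - c b) < e"
  shows "N_tendsto (\<lambda>n. \<Sum>b\<in>I. sc (\<alpha> n b) (y b)) (\<Sum>b\<in>I. sc (c b) (y b))"
  unfolding N_tendsto_def
proof (intro allI impI)
  fix e :: real
  assume "0 < e"
  have "\<forall>\<^sub>F n in sequentially. v (\<alpha> n b - c b) * N (y b) < e" if b: "b \<in> I" for b
  proof (cases "y b = 0")
    case False
    then have "0 < N (y b)"
      by (rule N_pos)
    then obtain M where "\<forall>n\<ge>M. v (\<alpha> n b - c b) < e / N (y b)"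
      using assms(2)[OF b, rule_format, OF divide_pos_pos[OF \<open>0 < e\<close> \<open>0 < N (y b)\<close>]] by blast
    then show ?thesis
      unfolding eventually_sequentially using \<open>0 < N (y b)\<close> by (auto simp: less_divide_eq)
  qed (simp add: \<open>0 < e\<close>)
  then have "\<forall>\<^sub>F n in sequentially. \<forall>b\<in>I. v (\<alpha> n b - c b) * N (y b) < e"
    by (intro eventually_ball_finite[OF assms(1)] ballI)
  then obtain M where M: "\<And>n b. M \<le> n \<Longrightarrow> b \<in> I \<Longrightarrow> v (\<alpha> n b - c b) * N (y b) < e"
    unfolding eventually_sequentially by blast
  have "N ((\<Sum>b\<in>I. sc (\<alpha> n b) (y b)) - (\<Sum>b\<in>I. sc (c b) (y b))) < e" if "M \<le> n" for n
  proof -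
    have "(\<Sum>b\<in>I. sc (\<alpha> n b) (y b)) - (\<Sum>b\<in>I. sc (c b) (y b)) = (\<Sum>b\<in>I. sc (\<alpha> n b - c b) (y b))"
      by (simp add: sum_subtractf scale_left_diff_distrib)
    then show ?thesis
      using M[OF that] \<open>0 < e\<close> by (auto intro!: N_sum_less simp: N_scale)
  qed
  then show "\<exists>M. \<forall>n\<ge>M. N ((\<Sum>b\<in>I. sc (\<alpha> n b) (y b)) - (\<Sum>b\<in>I. sc (c b) (y b))) < e"
    by blast
qed

lemma complete_wrt_dist_pos:
  assumes "complete_wrt N F" and "h \<notin> F"
  shows "\<exists>\<delta>>0. \<forall>g\<in>F. \<delta> \<le> N (h - g)"
proof (rule ccontr)
  assume "\<not> ?thesis"
  then have "\<forall>\<delta>>0. \<exists>g\<in>F. N (h - g) < \<delta>"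
    by (auto simp: not_le)
  then have "\<exists>g\<in>F. N (g - h) < inverse (real (Suc n))" for n
    using N_minus_commute by (metis of_nat_0_less_iff positive_imp_inverse_positive zero_less_Suc)
  then obtain g where g: "\<And>n. g n \<in> F" "\<And>n. N (g n - h) < inverse (real (Suc n))"
    by metis
  have "N_tendsto g h"
    unfolding N_tendsto_iff
  proof (rule tendsto_sandwich[OF _ _ tendsto_const LIMSEQ_inverse_real_of_nat])
    show "\<forall>\<^sub>F n in sequentially. 0 \<le> N (g n - h)"
      "\<forall>\<^sub>F n in sequentially. N (g n - h) \<le> inverse (real (Suc n))"
      using g(2) N_nonneg by (auto intro!: always_eventually less_imp_le)
  qed
  moreover obtain l where "l \<in> F" "N_tendsto g l"
    using complete_wrtD[OF assms(1) g(1) N_tendsto_Cauchy[OF \<open>N_tendsto g h\<close>]] by blast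
  ultimately show False
    using N_tendsto_unique assms(2) by blast
qed

lemma abs_convex_0: "abs_convex v sc A \<Longrightarrow> 0 \<in> A"
  and abs_convex_add: "abs_convex v sc A \<Longrightarrow> x \<in> A \<Longrightarrow> y \<in> A \<Longrightarrow> x + y \<in> A"
  and abs_convex_scale: "abs_convex v sc A \<Longrightarrow> v a \<le> 1 \<Longrightarrow> x \<in> A \<Longrightarrow> sc a x \<in> A"
  unfolding abs_convex_def by auto

lemma abs_convex_diff: "abs_convex v sc A \<Longrightarrow> x \<in> A \<Longrightarrow> y \<in> A \<Longrightarrow> x - y \<in> A"
  using abs_convex_add[of A x "- y"] abs_convex_scale[of A "-1" y] by simp

lemma abs_convex_sum_scale:
  assumes "abs_convex v sc A" and "\<And>b. b \<in> I \<Longrightarrow> v (\<alpha> b) \<le> 1 \<and> f b \<in> A"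
  shows "(\<Sum>b\<in>I. sc (\<alpha> b) (f b)) \<in> A"
  using assms(2)
  by (induct I rule: infinite_finite_induct) (auto intro: abs_convex_0 abs_convex_add abs_convex_scale assms(1))

lemma abs_convex_Int_subspace: "abs_convex v sc A \<Longrightarrow> subspace W \<Longrightarrow> abs_convex v sc (A \<inter> W)"
  unfolding abs_convex_def subspace_def by auto

lemma abs_convex_aco: "abs_convex v sc (aco v sc S)"
  unfolding aco_def by (rule hull_in) (unfold abs_convex_def, blast)

lemma abs_convex_norm_le:
  assumes "abs_convex v sc A" "0 \<le> R"
  shows "abs_convex v sc {x \<in> A. N x \<le> R}"
  unfolding abs_convex_def
proof (intro conjI ballI allI impI)
  show "0 \<in> {x \<in> A. N x \<le> R}"
    using abs_convex_0[OF assms(1)] assms(2) by simp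
  show "x + y \<in> {x \<in> A. N x \<le> R}" if "x \<in> {x \<in> A. N x \<le> R}" "y \<in> {x \<in> A. N x \<le> R}" for x y
    using that abs_convex_add[OF assms(1)] order_trans[OF N_add_le_max[of x y]] by simp
  show "sc a x \<in> {x \<in> A. N x \<le> R}" if "v a \<le> 1 \<and> x \<in> {x \<in> A. N x \<le> R}" for a x
    using that abs_convex_scale[OF assms(1)] mult_mono[of "v a" 1 "N x" R] v_nonneg N_nonneg assms(2)
    by (simp add: N_scale)
qed

lemma local_compactoidD:
  assumes "local_compactoid v sc N A" "0 < e"
  shows "\<exists>S. finite S \<and> A \<subseteq> msum {x. N x < e} (span S)"
proof -
  have "zero_nhd N {x. N x < e}"
    unfolding zero_nhd_def using assms(2) by blast
  then show ?thesis
    using assms(1) unfolding local_compactoid_def by blast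
qed

text \<open>For absolutely convex \<open>X\<close> this is the largest subspace contained in \<open>X\<close>.\<close>
definition lineality :: "'e set \<Rightarrow> 'e set" where
  "lineality X = {d. \<forall>c. sc c d \<in> X}"

lemma lineality_scale_in: "d \<in> lineality X \<Longrightarrow> sc c d \<in> X"
  unfolding lineality_def by simp

lemma lineality_subset: "lineality X \<subseteq> X"
  using lineality_scale_in[of _ X 1] by auto

lemma lineality_mono: "X \<subseteq> Y \<Longrightarrow> lineality X \<subseteq> lineality Y"
  unfolding lineality_def by blast

lemma subspace_lineality:
  assumes "abs_convex v sc X"
  shows "subspace (lineality X)"
  unfolding subspace_def lineality_def
  using abs_convex_0[OF assms] abs_convex_add[OF assms] by (simp add: scale_right_distrib)

lemma lineality_add_in:
  "abs_convex v sc X \<Longrightarrow> x \<in> X \<Longrightarrow> d \<in> lineality X \<Longrightarrow> x + d \<in> X"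
  using abs_convex_add lineality_subset by blast

definition bounded_mod_lineality :: "'e set \<Rightarrow> bool" where
  "bounded_mod_lineality X \<longleftrightarrow> (\<exists>R. \<forall>x\<in>X. \<exists>d\<in>lineality X. N (x - d) \<le> R)"

lemma msum_bounded_part_lineality:
  assumes "abs_convex v sc A" "\<And>x. x \<in> A \<Longrightarrow> \<exists>d\<in>lineality A. N (x - d) \<le> R"
  shows "A = msum {x \<in> A. N x \<le> R} (lineality A)"
proof
  show "A \<subseteq> msum {x \<in> A. N x \<le> R} (lineality A)"
  proof
    fix x
    assume "x \<in> A"
    then obtain d where d: "d \<in> lineality A" "N (x - d) \<le> R"
      using assms(2) by blast
    then have "x - d \<in> A"
      using abs_convex_diff[OF assms(1) \<open>x \<in> A\<close>] lineality_subset by blast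
    then show "x \<in> msum {x \<in> A. N x \<le> R} (lineality A)"
      unfolding msum_def using d by (intro CollectI exI[of _ "x - d"] exI[of _ d]) simp
  qed
  show "msum {x \<in> A. N x \<le> R} (lineality A) \<subseteq> A"
    unfolding msum_def using lineality_add_in[OF assms(1)] by blast
qed

subsection \<open>\<open>t\<close>-orthogonal families\<close>

lemma span_image_iff:
  assumes "finite I"
  shows "x \<in> span (y ` I) \<longleftrightarrow> (\<exists>\<alpha>. x = (\<Sum>b\<in>I. sc (\<alpha> b) (y b)))"
proof
  assume "x \<in> span (y ` I)"
  then show "\<exists>\<alpha>. x = (\<Sum>b\<in>I. sc (\<alpha> b) (y b))"
  proof (induct rule: span_induct_alt)
    case base
    show ?case
      by (rule exI[of _ "\<lambda>_. 0"]) simp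
  next
    case (step c x z)
    then obtain b\<^sub>0 \<alpha> where b\<^sub>0: "b\<^sub>0 \<in> I" "x = y b\<^sub>0" and \<alpha>: "z = (\<Sum>b\<in>I. sc (\<alpha> b) (y b))"
      by auto
    have "(\<Sum>b\<in>I. sc (\<alpha> b + (if b = b\<^sub>0 then c else 0)) (y b))
        = (\<Sum>b\<in>I. sc (\<alpha> b) (y b)) + (\<Sum>b\<in>I. if b = b\<^sub>0 then sc c (y b) else 0)"
      by (subst sum.distrib[symmetric]) (auto intro: sum.cong simp: scale_left_distrib)
    also have "\<dots> = sc c x + z"
      using assms b\<^sub>0 by (simp add: \<alpha> add.commute)
    finally show ?case
      by metis
  qed
qed (auto intro: span_sum span_scale span_base)

text \<open>The paper's condition \<open>\<parallel>\<Sum>\<^sub>c \<alpha>\<^sub>c y\<^sub>c\<parallel> \<ge> \<tau> max\<^sub>c |\<alpha>\<^sub>c| \<parallel>y\<^sub>c\<parallel>\<close>, stated coefficientwise.\<close>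
definition t_orthogonal :: "real \<Rightarrow> 'i set \<Rightarrow> ('i \<Rightarrow> 'e) \<Rightarrow> bool" where
  "t_orthogonal \<tau> I y \<longleftrightarrow> 0 < \<tau> \<and> (\<forall>b\<in>I. y b \<noteq> 0) \<and>
     (\<forall>\<alpha>. \<forall>b\<in>I. \<tau> * v (\<alpha> b) * N (y b) \<le> N (\<Sum>c\<in>I. sc (\<alpha> c) (y c)))"

lemma t_orthogonal_pos: "t_orthogonal \<tau> I y \<Longrightarrow> 0 < \<tau>"
  and t_orthogonal_nonzero: "t_orthogonal \<tau> I y \<Longrightarrow> b \<in> I \<Longrightarrow> y b \<noteq> 0"
  and t_orthogonalD: "t_orthogonal \<tau> I y \<Longrightarrow> b \<in> I \<Longrightarrow>
     \<tau> * v (\<alpha> b) * N (y b) \<le> N (\<Sum>c\<in>I. sc (\<alpha> c) (y c))"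
  unfolding t_orthogonal_def by blast+

lemma t_orthogonal_coeff_le:
  assumes "t_orthogonal \<tau> I y" "b \<in> I"
  shows "v (\<alpha> b) \<le> N (\<Sum>c\<in>I. sc (\<alpha> c) (y c)) / (\<tau> * N (y b))"
proof -
  have "0 < \<tau> * N (y b)"
    using t_orthogonal_pos[OF assms(1)] N_pos[OF t_orthogonal_nonzero[OF assms]] by simp
  moreover have "v (\<alpha> b) * (\<tau> * N (y b)) \<le> N (\<Sum>c\<in>I. sc (\<alpha> c) (y c))"
    using t_orthogonalD[OF assms, of \<alpha>] by (simp add: mult_ac)
  ultimately show ?thesis
    by (simp add: le_divide_eq)
qed

lemma t_orthogonal_subset:
  assumes "t_orthogonal \<tau> I y" "J \<subseteq> I" "finite I"
  shows "t_orthogonal \<tau> J y"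
proof -
  have "\<tau> * v (\<alpha> b) * N (y b) \<le> N (\<Sum>c\<in>J. sc (\<alpha> c) (y c))" if "b \<in> J" for \<alpha> b
  proof -
    define \<beta> where "\<beta> c = (if c \<in> J then \<alpha> c else 0)" for c
    have "(\<Sum>c\<in>I. sc (\<beta> c) (y c)) = (\<Sum>c\<in>J. sc (\<beta> c) (y c))"
      using assms(2,3) by (intro sum.mono_neutral_right) (auto simp: \<beta>_def)
    also have "\<dots> = (\<Sum>c\<in>J. sc (\<alpha> c) (y c))"
      by (intro sum.cong) (auto simp: \<beta>_def)
    finally have sum_eq: "(\<Sum>c\<in>I. sc (\<beta> c) (y c)) = (\<Sum>c\<in>J. sc (\<alpha> c) (y c))" .
    have "\<tau> * v (\<beta> b) * N (y b) \<le> N (\<Sum>c\<in>I. sc (\<beta> c) (y c))"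
      using assms(2) that by (intro t_orthogonalD[OF assms(1)]) blast
    moreover have "v (\<beta> b) = v (\<alpha> b)"
      using that by (simp add: \<beta>_def)
    ultimately show ?thesis
      by (simp add: sum_eq)
  qed
  then show ?thesis
    using assms(1,2) unfolding t_orthogonal_def by blast
qed

lemma t_orthogonal_notin_span:
  assumes "finite J" "t_orthogonal \<tau> (insert e J) y" "e \<notin> J"
  shows "y e \<notin> span (y ` J)"
proof
  assume "y e \<in> span (y ` J)"
  then obtain \<beta> where \<beta>: "y e = (\<Sum>c\<in>J. sc (\<beta> c) (y c))"
    using span_image_iff[OF assms(1)] by blast
  define \<alpha> where "\<alpha> c = (if c = e then 1 else - \<beta> c)" for c
  have "(\<Sum>c\<in>J. sc (\<alpha> c) (y c)) = (\<Sum>c\<in>J. - sc (\<beta> c) (y c))"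
    using assms(3) by (intro sum.cong) (auto simp: \<alpha>_def)
  then have "(\<Sum>c\<in>insert e J. sc (\<alpha> c) (y c)) = y e - (\<Sum>c\<in>J. sc (\<beta> c) (y c))"
    using assms(1,3) by (simp add: \<alpha>_def sum_negf)
  then have "\<tau> * N (y e) \<le> 0"
    using t_orthogonalD[OF assms(2), of e \<alpha>] \<beta> by (simp add: \<alpha>_def)
  moreover have "0 < \<tau> * N (y e)"
    using t_orthogonal_pos[OF assms(2)] N_pos[OF t_orthogonal_nonzero[OF assms(2)], of e] by simp
  ultimately show False
    by linarith
qed

text \<open>Coefficients of \<open>x\<close> are bounded by \<open>v (\<mu> b)\<close>, so \<open>x\<close> is a combination of the \<open>\<mu> b y b\<close>
  with coefficients in \<open>B\<^sub>K\<close>.\<close>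
lemma t_orthogonal_span_mem_abs_convex:
  assumes "abs_convex v sc A" "finite I" "t_orthogonal \<tau> I y" "x \<in> span (y ` I)"
    and "\<And>b. b \<in> I \<Longrightarrow> \<mu> b \<noteq> 0 \<and> sc (\<mu> b) (y b) \<in> A \<and> N x \<le> \<tau> * v (\<mu> b) * N (y b)"
  shows "x \<in> A"
proof -
  obtain \<alpha> where \<alpha>: "x = (\<Sum>b\<in>I. sc (\<alpha> b) (y b))"
    using iffD1[OF span_image_iff[OF assms(2)] assms(4)] by blast
  have "v (\<alpha> b / \<mu> b) \<le> 1" if "b \<in> I" for b
  proof -
    have "v (\<alpha> b) * (\<tau> * N (y b)) \<le> v (\<mu> b) * (\<tau> * N (y b))"
      using t_orthogonalD[OF assms(3) that, of \<alpha>] \<alpha> assms(5)[OF that] by (simp add: mult_ac)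
    moreover have "0 < \<tau> * N (y b)"
      using t_orthogonal_pos[OF assms(3)] N_pos[OF t_orthogonal_nonzero[OF assms(3) that]] by simp
    ultimately have "v (\<alpha> b) \<le> v (\<mu> b)"
      by (simp add: mult_le_cancel_right_pos)
    then show ?thesis
      using assms(5)[OF that] v_pos[of "\<mu> b"] by (simp add: v_divide)
  qed
  then have "(\<Sum>b\<in>I. sc (\<alpha> b / \<mu> b) (sc (\<mu> b) (y b))) \<in> A"
    using assms(5) by (intro abs_convex_sum_scale[OF assms(1)]) blast
  moreover have "(\<Sum>b\<in>I. sc (\<alpha> b / \<mu> b) (sc (\<mu> b) (y b))) = x"
    unfolding \<alpha> using assms(5) by (intro sum.cong) auto
  ultimately show ?thesis
    by simp
qed

text \<open>Since \<open>t < 1\<close>, the infimum \<open>d > 0\<close> of the distances from \<open>h\<close> to \<open>F\<close> is nearly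
  attained at some \<open>g\<^sub>0\<close>, and then \<open>h - g\<^sub>0\<close> is \<open>t\<close>-orthogonal to \<open>F\<close>.\<close>
lemma exists_t_orthogonal_vector:
  assumes "subspace F" "complete_wrt N F" "h \<notin> F" "0 < t" "t < 1"
  shows "\<exists>g\<^sub>0\<in>F. \<forall>g\<in>F. t * N (h - g\<^sub>0) \<le> N (h - g\<^sub>0 - g)"
proof -
  obtain \<delta> where \<delta>: "0 < \<delta>" "\<And>g. g \<in> F \<Longrightarrow> \<delta> \<le> N (h - g)"
    using complete_wrt_dist_pos[OF assms(2,3)] by blast
  define D where "D = (\<lambda>g. N (h - g)) ` F"
  have D: "D \<noteq> {}" "bdd_below D"
    unfolding D_def using subspace_0[OF assms(1)] N_nonneg by (auto intro!: bdd_belowI[where m = 0])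
  have "\<delta> \<le> Inf D"
    using D(1) \<delta>(2) unfolding D_def by (auto intro: cInf_greatest)
  then have "Inf D < Inf D / t"
    using \<delta>(1) assms(4,5) by (simp add: less_divide_eq)
  then obtain g\<^sub>0 where g\<^sub>0: "g\<^sub>0 \<in> F" "N (h - g\<^sub>0) < Inf D / t"
    using cInf_lessD[OF D(1)] unfolding D_def by auto
  have "t * N (h - g\<^sub>0) \<le> N (h - g\<^sub>0 - g)" if "g \<in> F" for g
  proof -
    have "Inf D \<le> N (h - (g\<^sub>0 + g))"
      using D(2) subspace_add[OF assms(1) g\<^sub>0(1) that] unfolding D_def by (auto intro: cInf_lower)
    then show ?thesis
      using g\<^sub>0(2) assms(4) by (simp add: diff_diff_eq pos_less_divide_eq mult.commute)
  qed
  then show ?thesis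
    using g\<^sub>0(1) by blast
qed

lemma N_scale_add_ge_far:
  assumes "subspace F" "w \<in> F" "0 \<le> t" and far: "\<And>g. g \<in> F \<Longrightarrow> t * N z \<le> N (z - g)"
  shows "t * v a * N z \<le> N (sc a z + w)"
proof (cases "a = 0")
  case False
  have "sc a z + w = sc a (z - (- sc (inverse a) w))"
    using False by (simp add: scale_right_distrib)
  then have "N (sc a z + w) = v a * N (z - (- sc (inverse a) w))"
    by (simp add: N_scale)
  moreover have "v a * (t * N z) \<le> v a * N (z - (- sc (inverse a) w))"
    using assms(1,2) by (intro mult_left_mono far subspace_neg subspace_scale v_nonneg)
  ultimately show ?thesis
    by (simp add: mult_ac)
qed (simp add: N_nonneg)

lemma N_subspace_add_ge_far:
  assumes "subspace F" "w \<in> F" "0 \<le> t" "t \<le> 1" and far: "\<And>g. g \<in> F \<Longrightarrow> t * N z \<le> N (z - g)"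
  shows "t * N w \<le> N (sc a z + w)"
proof -
  have "N w \<le> max (N (sc a z + w)) (v a * N z)"
    using N_diff_le_max[of "sc a z + w" "sc a z"] by (simp add: N_scale)
  then consider "N w \<le> N (sc a z + w)" | "N w \<le> v a * N z"
    by (metis max.bounded_iff nle_le)
  then show ?thesis
  proof cases
    case 1
    then show ?thesis
      using assms(3,4) N_nonneg[of w] by (meson mult_left_le_one_le order_trans)
  next
    case 2
    then have "t * N w \<le> t * v a * N z"
      using assms(3) by (simp add: mult.assoc mult_left_mono)
    also have "\<dots> \<le> N (sc a z + w)"
      using assms(1-3) far by (rule N_scale_add_ge_far)
    finally show ?thesis .
  qed
qed

lemma t_orthogonal_insert:
  assumes "finite H" "h \<notin> H" "t_orthogonal \<tau> H y" "\<tau> \<le> 1" "0 < t" "t \<le> 1" "z \<noteq> 0"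
    and far: "\<And>g. g \<in> span (y ` H) \<Longrightarrow> t * N z \<le> N (z - g)"
  shows "t_orthogonal (t * \<tau>) (insert h H) (y(h := z))"
  unfolding t_orthogonal_def
proof (intro conjI allI ballI)
  show "0 < t * \<tau>"
    using assms(5) t_orthogonal_pos[OF assms(3)] by simp
  show "(y(h := z)) b \<noteq> 0" if "b \<in> insert h H" for b
    using that assms(7) t_orthogonal_nonzero[OF assms(3)] by auto
next
  fix \<alpha> :: "_ \<Rightarrow> 'k" and b
  assume b: "b \<in> insert h H"
  define w where "w = (\<Sum>c\<in>H. sc (\<alpha> c) (y c))"
  have sum_eq: "(\<Sum>c\<in>insert h H. sc (\<alpha> c) ((y(h := z)) c)) = sc (\<alpha> h) z + w"
    using assms(1,2) unfolding w_def by (auto intro: sum.cong)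
  have w: "w \<in> span (y ` H)"
    unfolding w_def by (intro span_sum span_scale span_base) auto
  show "t * \<tau> * v (\<alpha> b) * N ((y(h := z)) b) \<le> N (\<Sum>c\<in>insert h H. sc (\<alpha> c) ((y(h := z)) c))"
  proof (cases "b = h")
    case True
    have "t * \<tau> * v (\<alpha> h) * N z \<le> t * v (\<alpha> h) * N z"
      using assms(4,5) mult_left_le_one_le[OF mult_nonneg_nonneg[OF v_nonneg N_nonneg], of \<tau> "\<alpha> h" z]
        t_orthogonal_pos[OF assms(3)] by (simp add: mult.assoc)
    also have "\<dots> \<le> N (sc (\<alpha> h) z + w)"
      using w less_imp_le[OF assms(5)] far by (rule N_scale_add_ge_far[OF subspace_span])
    finally show ?thesis
      using True sum_eq by simp
  next
    case False
    then have "t * \<tau> * v (\<alpha> b) * N (y b) \<le> t * N w"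
      using t_orthogonalD[OF assms(3), of b \<alpha>] b assms(5) unfolding w_def by (simp add: mult.assoc)
    also have "\<dots> \<le> N (sc (\<alpha> h) z + w)"
      using w less_imp_le[OF assms(5)] assms(6) far by (rule N_subspace_add_ge_far[OF subspace_span])
    finally show ?thesis
      using False sum_eq by simp
  qed
qed

lemma far_from_subspace_if_near_far:
  assumes "subspace F" "s \<in> F" "\<And>g. g \<in> F \<Longrightarrow> \<eta> \<le> N (y - g)" "N (x - (s + y)) < \<eta>" "g \<in> F"
  shows "\<eta> \<le> N (x - g)"
proof -
  have far: "\<eta> \<le> N (y - (g - s))"
    using assms(1,2,5) by (intro assms(3) subspace_diff)
  then have "N (y - (g - s) + (x - (s + y))) = N (y - (g - s))"
    using assms(4) by (intro N_add_eq_left) simp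
  moreover have "y - (g - s) + (x - (s + y)) = x - g"
    by simp
  ultimately show ?thesis
    using far by simp
qed

subsection \<open>Coordinates modulo a subspace\<close>

definition coord :: "'e set \<Rightarrow> 'e \<Rightarrow> 'e \<Rightarrow> 'k" where
  "coord S e x = (THE c. x - sc c e \<in> span S)"

context
  fixes S :: "'e set" and e :: 'e
  assumes e_notin: "e \<notin> span S"
begin

lemma coord_eqI:
  assumes "x - sc c e \<in> span S"
  shows "coord S e x = c"
  unfolding coord_def
proof (rule the_equality)
  show "x - sc c e \<in> span S"
    by (rule assms)
  fix c'
  assume c': "x - sc c' e \<in> span S"
  have "sc (c - c') e \<in> span S"
    using span_diff[OF c' assms] by (simp add: scale_left_diff_distrib)
  then show "c' = c"
    using span_scale[of "sc (c - c') e" S "inverse (c - c')"] e_notin by (cases "c = c'") auto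
qed

lemma coord_in_span:
  assumes "x \<in> span (insert e S)"
  shows "x - sc (coord S e x) e \<in> span S"
  using assms coord_eqI unfolding span_insert[of e S] by auto

lemma coord_span_eq_0: "x \<in> span S \<Longrightarrow> coord S e x = 0"
  by (rule coord_eqI) simp

lemma coord_add:
  assumes "x \<in> span (insert e S)" "x' \<in> span (insert e S)"
  shows "coord S e (x + x') = coord S e x + coord S e x'"
proof (rule coord_eqI)
  have eq: "x + x' - sc (coord S e x + coord S e x') e
      = (x - sc (coord S e x) e) + (x' - sc (coord S e x') e)"
    by (simp add: scale_left_distrib algebra_simps)
  show "x + x' - sc (coord S e x + coord S e x') e \<in> span S"
    unfolding eq by (intro span_add coord_in_span assms)
qed

lemma coord_scale:
  assumes "x \<in> span (insert e S)"
  shows "coord S e (sc c x) = c * coord S e x"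
proof (rule coord_eqI)
  show "sc c x - sc (c * coord S e x) e \<in> span S"
    using span_scale[OF coord_in_span[OF assms], of c] by (simp add: scale_right_diff_distrib)
qed

lemma coord_diff:
  assumes "x \<in> span (insert e S)" "x' \<in> span (insert e S)"
  shows "coord S e (x - x') = coord S e x - coord S e x'"
  using coord_add[OF assms(1) span_neg[OF assms(2)]] coord_scale[OF assms(2), of "-1"] by simp

lemma coord_eq_0_iff:
  assumes "x \<in> span (insert e S)"
  shows "coord S e x = 0 \<longleftrightarrow> x \<in> span S"
  using coord_in_span[OF assms] coord_span_eq_0 by auto

end

lemma bounded_mod_lineality_insert_lineality_vector:
  assumes X: "abs_convex v sc X" "X \<subseteq> span (insert e S)" and e: "e \<notin> span S"
    and l: "l \<in> lineality X" "coord S e l = 1"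
    and bdd: "bounded_mod_lineality (X \<inter> span S)"
  shows "bounded_mod_lineality X"
proof -
  obtain R where R: "\<And>x. x \<in> X \<inter> span S \<Longrightarrow> \<exists>d\<in>lineality (X \<inter> span S). N (x - d) \<le> R"
    using bdd unfolding bounded_mod_lineality_def by blast
  have lin: "lineality (X \<inter> span S) \<subseteq> lineality X"
    by (rule lineality_mono) blast
  have "\<exists>d\<in>lineality X. N (x - d) \<le> R" if "x \<in> X" for x
  proof -
    have lV: "l \<in> span (insert e S)"
      using l(1) lineality_subset X(2) by blast
    have "x - sc (coord S e x) l \<in> X"
      using abs_convex_diff[OF X(1) that lineality_scale_in[OF l(1)]] .
    moreover have "coord S e (x - sc (coord S e x) l) = 0"
      using that X(2) lV l(2) by (simp add: coord_diff[OF e] coord_scale[OF e] span_scale subsetD)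
    ultimately have "x - sc (coord S e x) l \<in> X \<inter> span S"
      using coord_eq_0_iff[OF e] that X(2) lV by (auto intro: span_diff span_scale)
    then obtain d where d: "d \<in> lineality (X \<inter> span S)" "N (x - sc (coord S e x) l - d) \<le> R"
      using R by blast
    have "sc (coord S e x) l + d \<in> lineality X"
      using subspace_lineality[OF X(1)] l(1) d(1) lin by (auto intro: subspace_add subspace_scale)
    then show ?thesis
      using d(2) by (intro bexI[of _ "sc (coord S e x) l + d"]) (simp_all add: diff_diff_eq)
  qed
  then show ?thesis
    unfolding bounded_mod_lineality_def by blast
qed

lemma span_insert_diff:
  assumes "g \<in> span S"
  shows "span (insert (h - g) S) = span (insert h S)"
proof -
  have "g \<in> span (insert h S)" "g \<in> span (insert (h - g) S)"
    using assms span_mono[of S] by blast+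
  then have "h - g \<in> span (insert h S)" "h \<in> span (insert (h - g) S)"
    using span_diff[OF span_base] span_add[OF span_base, of "h - g" _ g] by auto
  then have "insert (h - g) S \<subseteq> span (insert h S)" "insert h S \<subseteq> span (insert (h - g) S)"
    by (auto intro: span_base)
  then show ?thesis
    by (intro equalityI span_minimal subspace_span)
qed

lemma exists_independent_subset_card:
  assumes "\<And>S. finite S \<Longrightarrow> \<not> H \<subseteq> span S"
  shows "\<exists>B\<subseteq>H. finite B \<and> independent B \<and> card B = n"
proof (induct n)
  case 0
  show ?case
    by (intro exI[of _ "{}"]) (simp add: independent_empty)
next
  case (Suc n)
  then obtain B where B: "B \<subseteq> H" "finite B" "independent B" "card B = n"
    by blast
  moreover obtain h where "h \<in> H" "h \<notin> span B"
    using assms[OF B(2)] by blast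
  moreover have "h \<notin> B"
    using \<open>h \<notin> span B\<close> span_base by blast
  ultimately show ?case
    by (intro exI[of _ "insert h B"]) (simp add: independent_insertI)
qed

lemma exists_nontrivial_relation:
  assumes "finite I" "finite T" "card T < card I" and "\<And>b. b \<in> I \<Longrightarrow> \<phi> b \<in> span T"
  shows "\<exists>\<alpha>. (\<exists>b\<in>I. \<alpha> b \<noteq> 0) \<and> (\<Sum>b\<in>I. sc (\<alpha> b) (\<phi> b)) = 0"
proof (cases "inj_on \<phi> I")
  case True
  have "dependent (\<phi> ` I)"
  proof (rule ccontr)
    assume "independent (\<phi> ` I)"
    then have "card (\<phi> ` I) \<le> card T"
      using independent_span_bound[OF assms(2)] assms(4) by blast
    then show False
      using card_image[OF True] assms(3) by simp
  qed
  then obtain u where u: "\<exists>w\<in>\<phi> ` I. u w \<noteq> 0" "(\<Sum>w\<in>\<phi> ` I. sc (u w) w) = 0"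
    using dependent_finite[of "\<phi> ` I"] assms(1) by auto
  then show ?thesis
    using sum.reindex[OF True, of "\<lambda>w. sc (u w) w"] by (intro exI[of _ "u \<circ> \<phi>"]) auto
next
  case False
  then obtain b\<^sub>1 b\<^sub>2 where b: "b\<^sub>1 \<in> I" "b\<^sub>2 \<in> I" "b\<^sub>1 \<noteq> b\<^sub>2" "\<phi> b\<^sub>1 = \<phi> b\<^sub>2"
    unfolding inj_on_def by blast
  define \<alpha> where "\<alpha> b = (if b = b\<^sub>1 then (1::'k) else if b = b\<^sub>2 then -1 else 0)" for b
  have "(\<Sum>b\<in>I. sc (\<alpha> b) (\<phi> b))
      = (\<Sum>b\<in>I. (if b = b\<^sub>1 then \<phi> b else 0) - (if b = b\<^sub>2 then \<phi> b else 0))"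
    using b(3) by (intro sum.cong) (auto simp: \<alpha>_def)
  also have "\<dots> = 0"
    using assms(1) b by (simp add: sum_subtractf)
  finally show ?thesis
    using b(1) by (intro exI[of _ \<alpha>]) (auto simp: \<alpha>_def)
qed

lemma finite_type_if_finite_span:
  assumes "subspace D" "finite S" "D \<subseteq> span S"
  shows "finite_type v sc N D"
  unfolding finite_type_def
proof (intro allI impI)
  fix p
  assume "nonarch_seminorm_on v sc D p \<and> continuous_on_norm N D p"
  then have "p 0 = 0"
    using subspace_0[OF assms(1)] unfolding nonarch_seminorm_on_def by (metis v_zero mult_zero_left scale_zero_left)
  obtain B where B: "B \<subseteq> D" "independent B" "D \<subseteq> span B"
    using maximal_independent_subset[of D] by blast
  have "finite B"
    using independent_span_bound[OF assms(2) B(2)] B(1) assms(3) by blast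
  moreover have "D \<subseteq> msum (span B) {x \<in> D. p x = 0}"
    using B(3) \<open>p 0 = 0\<close> subspace_0[OF assms(1)] unfolding msum_def by force
  ultimately show "\<exists>S. finite S \<and> S \<subseteq> D \<and> D \<subseteq> msum (span S) {x \<in> D. p x = 0}"
    using B(1) by blast
qed

end

locale nonarch_normed_space_complete_field = nonarch_normed_space sc v N
  for sc :: "'k::field \<Rightarrow> 'e::ab_group_add \<Rightarrow> 'e" and v N +
  assumes nontrivial_abs: "nontrivial_abs v" and complete_abs: "complete_abs v"
begin

lemma exists_v_between_0_1: "\<exists>p. 0 < v p \<and> v p < 1"
proof -
  obtain x where x: "x \<noteq> 0" "v x \<noteq> 1"
    using nontrivial_abs unfolding nontrivial_abs_def by blast
  show ?thesis
  proof (cases "v x < 1")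
    case True
    then show ?thesis
      using v_pos[OF x(1)] by blast
  next
    case False
    then have "1 < v x"
      using x(2) by simp
    then show ?thesis
      by (intro exI[of _ "inverse x"]) (simp add: v_inverse inverse_less_1_iff)
  qed
qed

definition \<pi> :: 'k where
  "\<pi> = (SOME p. 0 < v p \<and> v p < 1)"

lemma v_\<pi>: "0 < v \<pi>" "v \<pi> < 1"
  using someI_ex[OF exists_v_between_0_1] unfolding \<pi>_def by auto

lemma \<pi>_nonzero: "\<pi> \<noteq> 0"
  using v_\<pi>(1) by auto

lemma eventually_v_\<pi>_power_less:
  assumes "0 < e"
  shows "\<forall>\<^sub>F k in sequentially. v \<pi> ^ k * C < e"
proof -
  have "(\<lambda>k. v \<pi> ^ k * C) \<longlonglongrightarrow> 0"
    using v_\<pi> by (intro tendsto_mult_left_zero LIMSEQ_power_zero) simp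
  then show ?thesis
    using assms by (rule order_tendstoD(2))
qed

lemma abs_convex_absorbs_span:
  assumes "abs_convex v sc A" "x \<in> span A"
  shows "\<forall>\<^sub>F k in sequentially. sc (\<pi> ^ k) x \<in> A"
  using assms(2)
proof (induct rule: span_induct_alt)
  case base
  then show ?case
    using abs_convex_0[OF assms(1)] by simp
next
  case (step c a z)
  have "\<forall>\<^sub>F k in sequentially. v \<pi> ^ k * v c < 1"
    by (rule eventually_v_\<pi>_power_less) simp
  then show ?case
    using step(2)
  proof eventually_elim
    case (elim k)
    have "sc (\<pi> ^ k * c) a \<in> A"
      using elim(1) step(1) by (intro abs_convex_scale[OF assms(1)]) (simp_all add: v_mult v_power)
    then show ?case
      using abs_convex_add[OF assms(1) _ elim(2)] by (simp add: scale_right_distrib)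
  qed
qed

text \<open>The value group may be discrete, so a prescribed value can only be approximated up to the
  factor \<open>v \<pi>\<close>.\<close>
lemma exists_scalar_between:
  assumes "0 < a"
  shows "\<exists>\<mu>. a \<le> v \<mu> \<and> v \<mu> \<le> a / v \<pi>"
proof -
  define r where "r = v \<pi>"
  have r: "0 < r" "r < 1"
    using v_\<pi> unfolding r_def by auto
  obtain M where "v \<pi> ^ M * a < 1"
    using eventually_v_\<pi>_power_less[of 1 a] unfolding eventually_sequentially by auto
  then have a': "0 < r ^ M * a" "r ^ M * a < 1"
    using r assms unfolding r_def by auto
  obtain n where "v \<pi> ^ n * 1 < r ^ M * a"
    using eventually_v_\<pi>_power_less[OF a'(1), of 1] unfolding eventually_sequentially by auto
  then obtain k where k: "r ^ M * a \<le> r ^ k" "r ^ Suc k < r ^ M * a"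
    using ex_least_nat_less[of "\<lambda>i. r ^ i < r ^ M * a" n] a'(2) unfolding r_def by (auto simp: not_less)
  have "a \<le> r ^ k / r ^ M" "r ^ k / r ^ M \<le> a / r"
    using k r by (simp_all add: field_simps)
  then show ?thesis
    by (intro exI[of _ "\<pi> ^ k / \<pi> ^ M"]) (simp add: v_divide v_power r_def)
qed

lemma t_orthogonal_coeff_converges:
  assumes "t_orthogonal \<tau> I y" "b \<in> I" "N_Cauchy x" "\<And>n. x n = (\<Sum>b\<in>I. sc (\<alpha> n b) (y b))"
  shows "\<exists>c. \<forall>e>0. \<exists>M. \<forall>n\<ge>M. v (\<alpha> n b - c) < e"
proof -
  have pos: "0 < \<tau> * N (y b)"
    using t_orthogonal_pos[OF assms(1)] N_pos[OF t_orthogonal_nonzero[OF assms(1,2)]] by simp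
  have "\<exists>M. \<forall>m\<ge>M. \<forall>n\<ge>M. v (\<alpha> m b - \<alpha> n b) < e" if "0 < e" for e
  proof -
    have "0 < e * (\<tau> * N (y b))"
      using pos \<open>0 < e\<close> by simp
    then obtain M where M: "\<And>m n. M \<le> m \<Longrightarrow> M \<le> n \<Longrightarrow> N (x m - x n) < e * (\<tau> * N (y b))"
      using assms(3) unfolding N_Cauchy_def by blast
    have "v (\<alpha> m b - \<alpha> n b) < e" if "M \<le> m" "M \<le> n" for m n
    proof -
      have "x m - x n = (\<Sum>c\<in>I. sc (\<alpha> m c - \<alpha> n c) (y c))"
        by (simp add: assms(4) sum_subtractf scale_left_diff_distrib)
      then have "v (\<alpha> m b - \<alpha> n b) \<le> N (x m - x n) / (\<tau> * N (y b))"
        using t_orthogonal_coeff_le[OF assms(1,2), of "\<lambda>c. \<alpha> m c - \<alpha> n c"] by simp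
      also have "\<dots> < e"
        using M[OF that] pos by (simp add: divide_less_eq)
      finally show ?thesis .
    qed
    then show ?thesis
      by blast
  qed
  then show ?thesis
    using complete_abs[unfolded complete_abs_def, rule_format, of "\<lambda>n. \<alpha> n b"] by blast
qed

lemma complete_wrt_span_t_orthogonal:
  assumes "finite I" "t_orthogonal \<tau> I y"
  shows "complete_wrt N (span (y ` I))"
  unfolding complete_wrt_iff
proof (intro allI impI)
  fix x
  assume "\<forall>n. x n \<in> span (y ` I)" "N_Cauchy x"
  then have "\<forall>n. \<exists>\<alpha>. x n = (\<Sum>b\<in>I. sc (\<alpha> b) (y b))"
    using span_image_iff[OF assms(1)] by blast
  then obtain \<alpha> where \<alpha>: "\<And>n. x n = (\<Sum>b\<in>I. sc (\<alpha> n b) (y b))"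
    by metis
  obtain c where "\<And>b. b \<in> I \<Longrightarrow> \<forall>e>0. \<exists>M. \<forall>n\<ge>M. v (\<alpha> n b - c b) < e"
    using t_orthogonal_coeff_converges[OF assms(2) _ \<open>N_Cauchy x\<close> \<alpha>] by metis
  then have "N_tendsto (\<lambda>n. \<Sum>b\<in>I. sc (\<alpha> n b) (y b)) (\<Sum>b\<in>I. sc (c b) (y b))"
    by (rule N_tendsto_sum_scale[OF assms(1)])
  moreover have "x = (\<lambda>n. \<Sum>b\<in>I. sc (\<alpha> n b) (y b))"
    using \<alpha> by (intro ext)
  moreover have "(\<Sum>b\<in>I. sc (c b) (y b)) \<in> span (y ` I)"
    by (intro span_sum span_scale span_base) auto
  ultimately show "\<exists>l\<in>span (y ` I). N_tendsto x l"
    by auto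
qed

lemma t_orthogonal_basis_exists:
  assumes "0 < t" "t < 1" "finite B" "independent B"
  shows "\<exists>y. t_orthogonal (t ^ card B) B y \<and> span (y ` B) = span B"
  using assms(3,4)
proof (induct B rule: finite_induct)
  case empty
  show ?case
    by (intro exI[of _ id]) (simp add: t_orthogonal_def)
next
  case (insert h H)
  then have "independent H" "h \<notin> span H"
    using independent_insert by auto
  then obtain y where y: "t_orthogonal (t ^ card H) H y" "span (y ` H) = span H"
    using insert.hyps(3) by blast
  have "complete_wrt N (span H)"
    using complete_wrt_span_t_orthogonal[OF insert.hyps(1) y(1)] y(2) by simp
  then obtain g\<^sub>0 where g\<^sub>0: "g\<^sub>0 \<in> span H" "\<And>g. g \<in> span H \<Longrightarrow> t * N (h - g\<^sub>0) \<le> N (h - g\<^sub>0 - g)"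
    using exists_t_orthogonal_vector[OF subspace_span _ \<open>h \<notin> span H\<close> assms(1,2)] by blast
  have "t_orthogonal (t * t ^ card H) (insert h H) (y(h := h - g\<^sub>0))"
  proof (rule t_orthogonal_insert)
    show "t ^ card H \<le> 1"
      using assms(1,2) by (simp add: power_le_one)
    show "h - g\<^sub>0 \<noteq> 0"
      using g\<^sub>0(1) \<open>h \<notin> span H\<close> by auto
  qed (use insert.hyps y g\<^sub>0(2) assms(1,2) in auto)
  moreover have "span ((y(h := h - g\<^sub>0)) ` insert h H) = span (insert h H)"
  proof -
    have "(y(h := h - g\<^sub>0)) ` insert h H = insert (h - g\<^sub>0) (y ` H)"
      using insert.hyps(2) by auto
    then show ?thesis
      using span_insert_diff[of g\<^sub>0 "y ` H" h] g\<^sub>0(1) y(2) by (simp add: span_insert[of h])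
  qed
  ultimately show ?case
    using insert.hyps(1,2) by auto
qed

lemma exists_t_orthogonal_spanning:
  assumes "finite S" "span A \<subseteq> span S"
  shows "\<exists>I y \<tau>. I \<subseteq> A \<and> finite I \<and> t_orthogonal \<tau> I y \<and> span (y ` I) = span A"
proof -
  obtain B where B: "B \<subseteq> A" "independent B" "A \<subseteq> span B"
    using maximal_independent_subset[of A] by blast
  have "finite B"
    using independent_span_bound[OF assms(1) B(2)] B(1) assms(2) span_superset by blast
  have "span B = span A"
    using B(1,3) by (intro equalityI span_mono span_minimal) simp_all
  moreover obtain y where "t_orthogonal ((1 / 2) ^ card B) B y" "span (y ` B) = span B"
    using t_orthogonal_basis_exists[of "1 / 2" B] \<open>finite B\<close> B(2) by auto
  ultimately show ?thesis
    using \<open>finite B\<close> B(1) by metis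
qed

subsection \<open>The span of a local compactoid\<close>

text \<open>A linear relation among the approximants would make a combination of the family smaller than
  \<open>r\<close>-orthogonality permits.\<close>
lemma t_orthogonal_not_all_near_span:
  assumes "finite I" "t_orthogonal r I y" "finite T" "card T < card I"
    and "\<And>b. b \<in> I \<Longrightarrow> \<phi> b \<in> span T"
  shows "\<exists>b\<in>I. r * N (y b) \<le> N (y b - \<phi> b)"
proof (rule ccontr)
  assume "\<not> ?thesis"
  then have near: "\<And>b. b \<in> I \<Longrightarrow> N (y b - \<phi> b) < r * N (y b)"
    by (auto simp: not_le)
  obtain \<alpha> where \<alpha>: "\<exists>b\<in>I. \<alpha> b \<noteq> 0" "(\<Sum>b\<in>I. sc (\<alpha> b) (\<phi> b)) = 0"
    using exists_nontrivial_relation[of I T \<phi>, OF assms(1,3,4,5)] by blast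
  define M where "M = Max ((\<lambda>b. v (\<alpha> b) * N (y b)) ` I)"
  have M_ge: "v (\<alpha> b) * N (y b) \<le> M" if "b \<in> I" for b
    unfolding M_def using assms(1) that by simp
  have "M \<in> (\<lambda>b. v (\<alpha> b) * N (y b)) ` I"
    unfolding M_def using assms(1) \<alpha>(1) by (intro Max_in) auto
  then obtain b\<^sub>M where b\<^sub>M: "b\<^sub>M \<in> I" "v (\<alpha> b\<^sub>M) * N (y b\<^sub>M) = M"
    by blast
  have "0 < M"
  proof -
    obtain b where "b \<in> I" "\<alpha> b \<noteq> 0"
      using \<alpha>(1) by blast
    then have "0 < v (\<alpha> b) * N (y b)"
      using v_pos N_pos[OF t_orthogonal_nonzero[OF assms(2)]] by simp
    then show ?thesis
      using M_ge[OF \<open>b \<in> I\<close>] by simp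
  qed
  have r: "0 < r"
    using t_orthogonal_pos[OF assms(2)] .
  have "(\<Sum>b\<in>I. sc (\<alpha> b) (y b)) = (\<Sum>b\<in>I. sc (\<alpha> b) (y b - \<phi> b))"
    using \<alpha>(2) by (simp add: scale_right_diff_distrib sum_subtractf)
  also have "N \<dots> < r * M"
  proof (rule N_sum_less)
    show "0 < r * M"
      using r \<open>0 < M\<close> by simp
    fix b
    assume "b \<in> I"
    show "N (sc (\<alpha> b) (y b - \<phi> b)) < r * M"
    proof (cases "\<alpha> b = 0")
      case False
      then have "v (\<alpha> b) * N (y b - \<phi> b) < v (\<alpha> b) * (r * N (y b))"
        using near[OF \<open>b \<in> I\<close>] v_pos by simp
      also have "\<dots> \<le> r * M"
        using M_ge[OF \<open>b \<in> I\<close>] r by (simp add: mult.left_commute)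
      finally show ?thesis
        by (simp add: N_scale)
    qed (use \<open>0 < r * M\<close> in simp)
  qed
  finally have "N (\<Sum>b\<in>I. sc (\<alpha> b) (y b)) < r * M" .
  moreover have "r * M \<le> N (\<Sum>b\<in>I. sc (\<alpha> b) (y b))"
    using t_orthogonalD[OF assms(2) b\<^sub>M(1), of \<alpha>] b\<^sub>M(2) by (simp add: mult.assoc)
  ultimately show False
    by simp
qed

text \<open>Riesz's lemma in the non-archimedean setting.\<close>
lemma exists_far_vector:
  assumes "subspace H" "\<And>S. finite S \<Longrightarrow> \<not> H \<subseteq> span S" "finite T" "0 < r" "r < 1"
  shows "\<exists>z\<in>H. z \<noteq> 0 \<and> (\<forall>g\<in>span T. r * N z \<le> N (z - g))"
proof -
  obtain B where B: "B \<subseteq> H" "finite B" "independent B" "card B = Suc (card T)"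
    using exists_independent_subset_card[OF assms(2)] by blast
  define t where "t = root (card B) r"
  have "0 < card B"
    using B(4) by simp
  then have "0 < t" "t < 1" "t ^ card B = r"
    using assms(4,5) unfolding t_def by (simp_all add: real_root_gt_zero)
  then obtain y where y: "t_orthogonal r B y" "span (y ` B) = span B"
    using t_orthogonal_basis_exists[OF _ _ B(2,3)] by metis
  have yH: "y b \<in> H" if "b \<in> B" for b
    using that y(2) span_minimal[OF B(1) assms(1)] span_base[of "y b" "y ` B"] by blast
  have "\<exists>b\<in>B. \<forall>g\<in>span T. r * N (y b) \<le> N (y b - g)"
  proof (rule ccontr)
    assume "\<not> ?thesis"
    then have "\<forall>b\<in>B. \<exists>g. g \<in> span T \<and> N (y b - g) < r * N (y b)"
      by (auto simp: not_le)
    then obtain \<phi> where \<phi>: "\<And>b. b \<in> B \<Longrightarrow> \<phi> b \<in> span T" "\<And>b. b \<in> B \<Longrightarrow> N (y b - \<phi> b) < r * N (y b)"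
      by metis
    then show False
      using t_orthogonal_not_all_near_span[OF B(2) y(1) assms(3) _ \<phi>(1)] B(4) by fastforce
  qed
  then show ?thesis
    using yH t_orthogonal_nonzero[OF y(1)] by blast
qed

lemma exists_far_vector_scaled:
  assumes "subspace H" "\<And>S. finite S \<Longrightarrow> \<not> H \<subseteq> span S" "finite T" "0 < \<eta>"
  shows "\<exists>y\<in>H. N y \<le> \<eta> / (v \<pi>)\<^sup>2 \<and> (\<forall>g\<in>span T. \<eta> \<le> N (y - g))"
proof -
  define r where "r = v \<pi>"
  have r: "0 < r" "r < 1"
    using v_\<pi> unfolding r_def by auto
  obtain z where z: "z \<in> H" "z \<noteq> 0" "\<And>g. g \<in> span T \<Longrightarrow> r * N z \<le> N (z - g)"
    using exists_far_vector[OF assms(1-3) r] by blast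
  have rz: "0 < r * N z"
    using N_pos[OF z(2)] r by simp
  obtain \<mu> where \<mu>: "\<eta> / (r * N z) \<le> v \<mu>" "v \<mu> \<le> \<eta> / (r * N z) / r"
    using exists_scalar_between[of "\<eta> / (r * N z)"] assms(4) rz unfolding r_def by auto
  have "\<mu> \<noteq> 0"
    using \<mu>(1) divide_pos_pos[OF assms(4) rz] by auto
  show ?thesis
  proof (intro bexI conjI ballI)
    show "sc \<mu> z \<in> H"
      using z(1) assms(1) by (rule subspace_scale[rotated])
    have "N (sc \<mu> z) = v \<mu> * N z"
      by (rule N_scale)
    also have "\<dots> \<le> \<eta> / (r * N z) / r * N z"
      using \<mu>(2) N_nonneg[of z] by (rule mult_right_mono)
    also have "\<dots> = \<eta> / r\<^sup>2"
      using rz r z(2) by (simp add: field_simps power2_eq_square)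
    finally show "N (sc \<mu> z) \<le> \<eta> / (v \<pi>)\<^sup>2"
      unfolding r_def .
    fix g
    assume "g \<in> span T"
    have "\<eta> \<le> v \<mu> * (r * N z)"
      using \<mu>(1) rz by (simp add: pos_divide_le_eq)
    also have "\<dots> \<le> v \<mu> * N (z - sc (inverse \<mu>) g)"
      using z(3)[OF span_scale[OF \<open>g \<in> span T\<close>]] by (simp add: mult_left_mono v_nonneg)
    also have "\<dots> = N (sc \<mu> z - g)"
      using \<open>\<mu> \<noteq> 0\<close> by (simp add: N_scale[symmetric] scale_right_diff_distrib)
    finally show "\<eta> \<le> N (sc \<mu> z - g)" .
  qed
qed

lemma exists_far_sequence:
  assumes "subspace H" "\<And>S. finite S \<Longrightarrow> \<not> H \<subseteq> span S" "\<And>k. finite (S k)" "\<And>k. 0 < \<eta> k"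
  shows "\<exists>T y. \<forall>k. S k \<subseteq> T k \<and> y k \<in> H \<and> N (y k) \<le> \<eta> k / (v \<pi>)\<^sup>2 \<and>
           (\<forall>g\<in>span (T k). \<eta> k \<le> N (y k - g)) \<and> insert (y k) (T k) \<subseteq> T (Suc k)"
proof -
  define P where "P k p \<longleftrightarrow> finite (fst p) \<and> S k \<subseteq> fst p \<and> snd p \<in> H \<and>
    N (snd p) \<le> \<eta> k / (v \<pi>)\<^sup>2 \<and> (\<forall>g\<in>span (fst p). \<eta> k \<le> N (snd p - g))" for k p
  have step: "\<exists>p. P k p \<and> T \<subseteq> fst p" if "finite T" for k T
  proof -
    have "finite (T \<union> S k)"
      using that assms(3) by simp
    then obtain y where "y \<in> H" "N y \<le> \<eta> k / (v \<pi>)\<^sup>2" "\<forall>g\<in>span (T \<union> S k). \<eta> k \<le> N (y - g)"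
      using exists_far_vector_scaled[OF assms(1,2) _ assms(4)] by blast
    then show ?thesis
      using that assms(3)[of k] unfolding P_def by (intro exI[of _ "(T \<union> S k, y)"]) auto
  qed
  have "\<exists>p. P 0 p"
    using step[of "{}" 0] by blast
  moreover have "\<exists>p'. P (Suc k) p' \<and> insert (snd p) (fst p) \<subseteq> fst p'" if "P k p" for k p
    using step[of "insert (snd p) (fst p)" "Suc k"] that unfolding P_def by auto
  ultimately have "\<exists>f. \<forall>k. P k (f k) \<and> insert (snd (f k)) (fst (f k)) \<subseteq> fst (f (Suc k))"
    by (rule dependent_nat_choice)
  then obtain f where "\<And>k. P k (f k) \<and> insert (snd (f k)) (fst (f k)) \<subseteq> fst (f (Suc k))"
    by blast
  then show ?thesis
    unfolding P_def by (intro exI[of _ "\<lambda>k. fst (f k)"] exI[of _ "\<lambda>k. snd (f k)"]) auto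
qed

text \<open>The increments \<open>y k\<close> of \<open>s\<close> are chosen small enough for \<open>s\<close> to converge in \<open>H\<close>, but far from
  the finite-dimensional span of \<open>S k\<close> and all earlier increments.\<close>
lemma exists_far_series:
  assumes "complete_wrt N H" "subspace H" "\<And>S. finite S \<Longrightarrow> \<not> H \<subseteq> span S" "\<And>k. finite (S k)"
  shows "\<exists>T s x. x \<in> H \<and> (\<forall>k. S k \<subseteq> T k \<and> s k \<in> span (T k) \<and>
           (\<forall>g\<in>span (T k). v \<pi> ^ (3 * k) \<le> N (s (Suc k) - s k - g)) \<and> N (x - s (Suc k)) < v \<pi> ^ (3 * k))"
proof -
  define r where "r = v \<pi>"
  have r: "0 < r" "r < 1"
    using v_\<pi> unfolding r_def by auto
  define \<eta> where "\<eta> k = (r ^ 3) ^ k" for k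
  have \<eta>_pos: "0 < \<eta> k" for k
    unfolding \<eta>_def using r by simp
  obtain T y where T: "\<And>k. S k \<subseteq> T k" "\<And>k. insert (y k) (T k) \<subseteq> T (Suc k)"
    and y: "\<And>k. y k \<in> H" "\<And>k. N (y k) \<le> \<eta> k / r\<^sup>2" "\<And>k g. g \<in> span (T k) \<Longrightarrow> \<eta> k \<le> N (y k - g)"
    using exists_far_sequence[of H S \<eta>, OF assms(2-4) \<eta>_pos] unfolding r_def by metis
  define s where "s n = (\<Sum>j<n. y j)" for n
  have s_T: "s k \<in> span (T k)" for k
  proof (induct k)
    case (Suc k)
    then have "s k \<in> span (T (Suc k))" "y k \<in> span (T (Suc k))"
      using T(2)[of k] span_mono[of "T k" "T (Suc k)"] by (auto intro: span_base)
    then show ?case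
      unfolding s_def by (simp add: span_add)
  qed (simp add: s_def span_zero)
  have "\<exists>x\<in>H. \<forall>m. N (x - s m) \<le> (r ^ 3) ^ m * (1 / r\<^sup>2)"
  proof (rule geometric_limit[OF assms(1)])
    show "s n \<in> H" for n
      unfolding s_def using y(1) assms(2) by (intro subspace_sum) auto
    show "N (s (Suc j) - s j) \<le> (r ^ 3) ^ j * (1 / r\<^sup>2)" for j
      using y(2)[of j] by (simp add: s_def \<eta>_def)
  qed (use r in \<open>auto simp: power_less_one_iff\<close>)
  then obtain x where x: "x \<in> H" "\<And>m. N (x - s m) \<le> (r ^ 3) ^ m * (1 / r\<^sup>2)"
    by blast
  have tail: "N (x - s (Suc k)) < \<eta> k" for k
  proof -
    have "(r ^ 3) ^ Suc k * (1 / r\<^sup>2) = r * \<eta> k"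
      using r by (simp add: \<eta>_def power2_eq_square power3_eq_cube field_simps)
    then have "N (x - s (Suc k)) \<le> r * \<eta> k"
      using x(2)[of "Suc k"] by simp
    also have "\<dots> < \<eta> k"
      using r \<eta>_pos[of k] by simp
    finally show ?thesis .
  qed
  have "s (Suc k) - s k = y k" for k
    by (simp add: s_def)
  then have "\<forall>k. S k \<subseteq> T k \<and> s k \<in> span (T k) \<and>
      (\<forall>g\<in>span (T k). v \<pi> ^ (3 * k) \<le> N (s (Suc k) - s k - g)) \<and> N (x - s (Suc k)) < v \<pi> ^ (3 * k)"
    using T(1) s_T y(3) tail unfolding \<eta>_def r_def by (simp add: power_mult)
  then show ?thesis
    using x(1) by blast
qed

text \<open>Some \<open>\<pi>\<^sup>k x\<close> lies in \<open>A\<close>, hence within \<open>v \<pi>\<^sup>k \<cdot> v \<pi>\<^sup>3\<^sup>k\<close> of \<open>span (S k)\<close>; dividing by \<open>\<pi>\<^sup>k\<close>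
  contradicts the farness of the \<open>k\<close>-th increment of the series.\<close>
lemma finite_span_if_local_compactoid:
  assumes "local_compactoid v sc N A" "complete_wrt N (span A)"
  shows "\<exists>S. finite S \<and> span A \<subseteq> span S"
proof (rule ccontr)
  assume "\<not> ?thesis"
  then have inf: "\<And>S. finite S \<Longrightarrow> \<not> span A \<subseteq> span S"
    by blast
  define r where "r = v \<pi>"
  have r: "0 < r" "r < 1"
    using v_\<pi> unfolding r_def by auto
  have "\<exists>S. finite S \<and> A \<subseteq> msum {x. N x < r ^ k * r ^ (3 * k)} (span S)" for k
    using local_compactoidD[OF assms(1)] r by simp
  then obtain S where S: "\<And>k. finite (S k)" "\<And>k. A \<subseteq> msum {x. N x < r ^ k * r ^ (3 * k)} (span (S k))"
    by metis
  obtain T s x where x: "x \<in> span A" and T: "\<And>k. S k \<subseteq> T k" "\<And>k. s k \<in> span (T k)"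
    and far: "\<And>k g. g \<in> span (T k) \<Longrightarrow> r ^ (3 * k) \<le> N (s (Suc k) - s k - g)"
    and tail: "\<And>k. N (x - s (Suc k)) < r ^ (3 * k)"
    using exists_far_series[of "span A" S, OF assms(2) subspace_span inf S(1)] unfolding r_def by metis
  have A: "abs_convex v sc A"
    using assms(1) unfolding local_compactoid_def by blast
  obtain k where "sc (\<pi> ^ k) x \<in> A"
    using abs_convex_absorbs_span[OF A x] unfolding eventually_sequentially by blast
  then obtain u f where u: "sc (\<pi> ^ k) x = u + f" "N u < r ^ k * r ^ (3 * k)" and "f \<in> span (S k)"
    using S(2) unfolding msum_def by blast
  define g where "g = sc (inverse (\<pi> ^ k)) f"
  have g: "g \<in> span (T k)"
    unfolding g_def using \<open>f \<in> span (S k)\<close> span_mono[OF T(1)] by (blast intro: span_scale)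
  have "x - g = sc (inverse (\<pi> ^ k)) u"
    using arg_cong[OF u(1), of "sc (inverse (\<pi> ^ k))"] \<pi>_nonzero
    by (simp add: g_def scale_right_distrib)
  then have "N (x - g) = N u / r ^ k"
    by (simp add: N_scale v_inverse v_power r_def divide_inverse mult.commute)
  also have "\<dots> < r ^ (3 * k)"
    using u(2) r by (simp add: divide_less_eq mult.commute)
  also have "r ^ (3 * k) \<le> N (x - g)"
    using far_from_subspace_if_near_far[OF subspace_span T(2) far _ g] tail[of k] by simp
  finally show False
    by simp
qed

subsection \<open>Decomposition in finite dimension\<close>

text \<open>The coordinate of \<open>\<pi> x\<close> is smaller than that of \<open>x\<^sub>0\<close>, so \<open>x\<close> differs from a multiple of
  \<open>x\<^sub>0\<close> with coefficient in \<open>\<pi>\<^sup>-\<^sup>1 B\<^sub>K\<close> by \<open>\<pi>\<^sup>-\<^sup>1\<close> times an element of \<open>X \<inter> span S\<close>.\<close>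
lemma near_lineality_if_coord_less:
  assumes X: "abs_convex v sc X" "X \<subseteq> span (insert e S)" and e: "e \<notin> span S"
    and R: "\<And>x. x \<in> X \<inter> span S \<Longrightarrow> \<exists>d\<in>lineality (X \<inter> span S). N (x - d) \<le> R"
    and x: "x \<in> X" "x\<^sub>0 \<in> X" "v \<pi> * v (coord S e x) < v (coord S e x\<^sub>0)"
  shows "\<exists>d\<in>lineality X. N (x - d) \<le> max (R / v \<pi>) (N x\<^sub>0 / v \<pi>)"
proof -
  have "0 < v (coord S e x\<^sub>0)"
    using x(3) v_\<pi>(1) v_nonneg[of "coord S e x"] by (meson le_less_trans mult_nonneg_nonneg less_imp_le)
  define q where "q = coord S e x / coord S e x\<^sub>0"
  have vq: "v (\<pi> * q) < 1"
    using x(3) \<open>0 < v (coord S e x\<^sub>0)\<close> by (simp add: q_def v_mult v_divide)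
  define x' where "x' = sc \<pi> x - sc (\<pi> * q) x\<^sub>0"
  have "x' \<in> X"
    unfolding x'_def using v_\<pi> vq x by (intro abs_convex_diff[OF X(1)] abs_convex_scale[OF X(1)]) simp_all
  moreover have "coord S e x' = \<pi> * coord S e x - \<pi> * q * coord S e x\<^sub>0"
    using X(2) x unfolding x'_def by (simp add: coord_diff[OF e] coord_scale[OF e] span_scale subsetD)
  then have "coord S e x' = 0"
    using \<open>0 < v (coord S e x\<^sub>0)\<close> by (auto simp: q_def)
  ultimately have "x' \<in> X \<inter> span S"
    using coord_eq_0_iff[OF e] X(2) by blast
  then obtain d' where d': "d' \<in> lineality (X \<inter> span S)" "N (x' - d') \<le> R"
    using R by blast
  have "x - sc (inverse \<pi>) d' = sc (inverse \<pi>) (x' - d') + sc q x\<^sub>0"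
    unfolding x'_def using \<pi>_nonzero by (simp add: scale_right_diff_distrib algebra_simps)
  then have "N (x - sc (inverse \<pi>) d') \<le> max (N (sc (inverse \<pi>) (x' - d'))) (N (sc q x\<^sub>0))"
    using N_add_le_max by simp
  also have "\<dots> \<le> max (R / v \<pi>) (N x\<^sub>0 / v \<pi>)"
  proof (rule max.mono)
    have "N (sc (inverse \<pi>) (x' - d')) = N (x' - d') / v \<pi>"
      by (simp add: N_scale v_inverse divide_inverse mult.commute)
    then show "N (sc (inverse \<pi>) (x' - d')) \<le> R / v \<pi>"
      using d'(2) v_\<pi>(1) by (simp add: divide_right_mono)
    have "v q \<le> 1 / v \<pi>"
      using vq v_\<pi>(1) by (simp add: v_mult field_simps)
    then have "v q * N x\<^sub>0 \<le> 1 / v \<pi> * N x\<^sub>0"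
      using N_nonneg[of x\<^sub>0] by (rule mult_right_mono)
    then show "N (sc q x\<^sub>0) \<le> N x\<^sub>0 / v \<pi>"
      by (simp add: N_scale)
  qed
  finally have "N (x - sc (inverse \<pi>) d') \<le> max (R / v \<pi>) (N x\<^sub>0 / v \<pi>)" .
  moreover have "sc (inverse \<pi>) d' \<in> lineality X"
    using d'(1) lineality_mono[of "X \<inter> span S" X] subspace_scale[OF subspace_lineality[OF X(1)]] by blast
  ultimately show ?thesis
    by blast
qed

text \<open>A vector \<open>x\<^sub>0\<close> whose coordinate nearly attains the supremum serves all \<open>x \<in> X\<close> at once.\<close>
lemma bounded_mod_lineality_insert_bounded_coord:
  assumes X: "abs_convex v sc X" "X \<subseteq> span (insert e S)" and e: "e \<notin> span S"
    and bdd_coord: "bdd_above ((\<lambda>x. v (coord S e x)) ` X)"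
    and bdd: "bounded_mod_lineality (X \<inter> span S)"
  shows "bounded_mod_lineality X"
proof (cases "\<forall>x\<in>X. coord S e x = 0")
  case True
  then have "X \<inter> span S = X"
    using coord_eq_0_iff[OF e] X(2) by blast
  then show ?thesis
    using bdd by simp
next
  case False
  then obtain x\<^sub>1 where x\<^sub>1: "x\<^sub>1 \<in> X" "coord S e x\<^sub>1 \<noteq> 0"
    by blast
  obtain R where R: "\<And>x. x \<in> X \<inter> span S \<Longrightarrow> \<exists>d\<in>lineality (X \<inter> span S). N (x - d) \<le> R"
    using bdd unfolding bounded_mod_lineality_def by blast
  define K where "K = Sup ((\<lambda>x. v (coord S e x)) ` X)"
  have K_ge: "v (coord S e x) \<le> K" if "x \<in> X" for x
    unfolding K_def using bdd_coord that by (intro cSup_upper) auto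
  have "0 < K"
    using K_ge[OF x\<^sub>1(1)] v_pos[OF x\<^sub>1(2)] by simp
  then have "v \<pi> * K < K"
    using v_\<pi> by simp
  then obtain x\<^sub>0 where x\<^sub>0: "x\<^sub>0 \<in> X" "v \<pi> * K < v (coord S e x\<^sub>0)"
    using less_cSupE[of "v \<pi> * K" "(\<lambda>x. v (coord S e x)) ` X"] x\<^sub>1(1) unfolding K_def by blast
  have "v \<pi> * v (coord S e x) < v (coord S e x\<^sub>0)" if "x \<in> X" for x
    using K_ge[OF that] v_\<pi>(1) x\<^sub>0(2) by (meson le_less_trans mult_left_mono less_imp_le)
  then show ?thesis
    using near_lineality_if_coord_less[OF X e R _ x\<^sub>0(1)] unfolding bounded_mod_lineality_def by blast
qed

lemma coord_surjective_if_unbounded: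
  assumes X: "abs_convex v sc X" "X \<subseteq> span (insert e S)" and e: "e \<notin> span S"
    and unbdd: "\<not> bdd_above ((\<lambda>x. v (coord S e x)) ` X)"
  shows "\<exists>x\<in>X. coord S e x = \<mu>"
proof -
  obtain x\<^sub>0 where x\<^sub>0: "x\<^sub>0 \<in> X" "v \<mu> < v (coord S e x\<^sub>0)"
    using unbdd unfolding bdd_above_def by (auto simp: not_le)
  then have "coord S e x\<^sub>0 \<noteq> 0"
    using v_nonneg[of \<mu>] by auto
  have "sc (\<mu> / coord S e x\<^sub>0) x\<^sub>0 \<in> X"
    using x\<^sub>0 v_nonneg[of \<mu>] by (intro abs_convex_scale[OF X(1)]) (simp_all add: v_divide)
  moreover have "coord S e (sc (\<mu> / coord S e x\<^sub>0) x\<^sub>0) = \<mu>"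
    using X(2) x\<^sub>0(1) \<open>coord S e x\<^sub>0 \<noteq> 0\<close> by (auto simp: coord_scale[OF e])
  ultimately show ?thesis
    by blast
qed

text \<open>Scaled by \<open>c\<close>, the first summand lies in \<open>X\<close> for large \<open>j\<close> and the error lies in the ball.\<close>
lemma lineality_memI:
  assumes X: "abs_convex v sc X" and ball: "0 < \<delta>" "\<And>x. x \<in> V \<Longrightarrow> N x < \<delta> \<Longrightarrow> x \<in> X" "subspace V"
    and approx: "\<And>j. l = sc (\<pi> ^ j) (p j) - D j + w j"
      "\<And>j. p j \<in> X" "\<And>j. D j \<in> lineality X" "\<And>j. w j \<in> V" "\<And>j. N (w j) \<le> v \<pi> ^ j * R"
  shows "l \<in> lineality X"
  unfolding lineality_def
proof (intro CollectI allI)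
  fix c
  have "\<forall>\<^sub>F j in sequentially. v \<pi> ^ j * v c < 1 \<and> v \<pi> ^ j * (v c * R) < \<delta>"
    using ball(1) by (intro eventually_conj eventually_v_\<pi>_power_less) simp_all
  then obtain j where j: "v \<pi> ^ j * v c < 1" "v \<pi> ^ j * (v c * R) < \<delta>"
    unfolding eventually_sequentially by blast
  have "sc (c * \<pi> ^ j) (p j) \<in> X"
    using j(1) approx(2) by (intro abs_convex_scale[OF X]) (simp_all add: v_mult v_power mult.commute)
  moreover have "sc c (D j) \<in> X"
    using lineality_scale_in[OF approx(3)] .
  moreover have "sc c (w j) \<in> X"
  proof (rule ball(2))
    show "sc c (w j) \<in> V"
      using approx(4) ball(3) by (rule subspace_scale[rotated])
    have "N (sc c (w j)) \<le> v c * (v \<pi> ^ j * R)"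
      using approx(5)[of j] v_nonneg[of c] by (simp add: N_scale mult_left_mono)
    then show "N (sc c (w j)) < \<delta>"
      using j(2) by (simp add: mult.left_commute)
  qed
  ultimately have "sc (c * \<pi> ^ j) (p j) - sc c (D j) + sc c (w j) \<in> X"
    by (intro abs_convex_add[OF X] abs_convex_diff[OF X])
  then show "sc c l \<in> X"
    using approx(1)[of j] by (simp add: scale_right_distrib scale_right_diff_distrib)
qed

lemma exists_coord_power_sequence:
  assumes X: "abs_convex v sc X" "X \<subseteq> span (insert e S)" and e: "e \<notin> span S"
    and unbdd: "\<not> bdd_above ((\<lambda>x. v (coord S e x)) ` X)"
    and R: "\<And>x. x \<in> X \<inter> span S \<Longrightarrow> \<exists>d\<in>lineality (X \<inter> span S). N (x - d) \<le> R"
  obtains p d where "\<And>j. p j \<in> X" "\<And>j. coord S e (p j) = inverse \<pi> ^ j"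
    "\<And>j. d j \<in> lineality X \<inter> span S" "\<And>j. N (sc \<pi> (p (Suc j)) - p j - d j) \<le> R"
proof -
  have "\<forall>j. \<exists>x\<in>X. coord S e x = inverse \<pi> ^ j"
    using coord_surjective_if_unbounded[OF X e unbdd] by blast
  then obtain p where p: "\<And>j. p j \<in> X" "\<And>j. coord S e (p j) = inverse \<pi> ^ j"
    by metis
  have "sc \<pi> (p (Suc j)) - p j \<in> X \<inter> span S" for j
  proof -
    have "sc \<pi> (p (Suc j)) - p j \<in> X"
      using v_\<pi> p(1) by (intro abs_convex_diff[OF X(1)] abs_convex_scale[OF X(1)]) simp_all
    moreover have "coord S e (sc \<pi> (p (Suc j)) - p j) = 0"
      using p X(2) \<pi>_nonzero by (simp add: coord_diff[OF e] coord_scale[OF e] span_scale subsetD)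
    ultimately show ?thesis
      using coord_eq_0_iff[OF e] X(2) by blast
  qed
  then have "\<forall>j. \<exists>d\<in>lineality (X \<inter> span S). N (sc \<pi> (p (Suc j)) - p j - d) \<le> R"
    using R by blast
  then obtain d where d: "\<And>j. d j \<in> lineality (X \<inter> span S)" "\<And>j. N (sc \<pi> (p (Suc j)) - p j - d j) \<le> R"
    by metis
  have "d j \<in> lineality X \<inter> span S" for j
    using d(1) lineality_mono[of "X \<inter> span S" X] lineality_subset[of "X \<inter> span S"] by blast
  then show ?thesis
    using that p d(2) by blast
qed

text \<open>With \<open>D j = \<Sum>\<^sub>i\<^sub><\<^sub>j \<pi>\<^sup>i d i\<close>, the vectors \<open>\<pi>\<^sup>j p j - D j - e \<in> span S\<close> form a Cauchy sequence; its limit,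
  shifted by \<open>e\<close>, is the required vector.\<close>
lemma lineality_vector_if_unbounded_coord:
  assumes X: "abs_convex v sc X" "X \<subseteq> span (insert e S)" and e: "e \<notin> span S"
    and unbdd: "\<not> bdd_above ((\<lambda>x. v (coord S e x)) ` X)"
    and W: "complete_wrt N (span S)"
    and ball: "0 < \<delta>" "\<And>x. x \<in> span (insert e S) \<Longrightarrow> N x < \<delta> \<Longrightarrow> x \<in> X"
    and bdd: "bounded_mod_lineality (X \<inter> span S)"
  shows "\<exists>l\<in>lineality X. coord S e l = 1"
proof -
  obtain R where "\<And>x. x \<in> X \<inter> span S \<Longrightarrow> \<exists>d\<in>lineality (X \<inter> span S). N (x - d) \<le> R"
    using bdd unfolding bounded_mod_lineality_def by blast
  then obtain p d where p: "\<And>j. p j \<in> X" "\<And>j. coord S e (p j) = inverse \<pi> ^ j"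
    and d: "\<And>j. d j \<in> lineality X \<inter> span S" "\<And>j. N (sc \<pi> (p (Suc j)) - p j - d j) \<le> R"
    using exists_coord_power_sequence[OF X e unbdd] by metis
  have XV: "x \<in> span (insert e S)" if "x \<in> X" for x
    using X(2) that by blast
  define D where "D j = (\<Sum>i<j. sc (\<pi> ^ i) (d i))" for j
  have "subspace (lineality X \<inter> span S)"
    using subspace_lineality[OF X(1)] by (intro subspace_inter) simp_all
  then have D: "D j \<in> lineality X \<inter> span S" for j
    unfolding D_def using d(1) by (intro subspace_sum subspace_scale) auto
  define u where "u j = sc (\<pi> ^ j) (p j) - D j - e" for j
  have u: "u j \<in> span S" for j
  proof -
    have "D j \<in> span (insert e S)"
      using D span_mono[of S "insert e S"] by blast
    then have "coord S e (sc (\<pi> ^ j) (p j) - D j) = 1"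
      using p XV D \<pi>_nonzero by (simp add: coord_diff[OF e] coord_scale[OF e] coord_span_eq_0[OF e] span_scale
          power_inverse)
    then show ?thesis
      using coord_in_span[OF e, of "sc (\<pi> ^ j) (p j) - D j"] XV[OF p(1)] \<open>D j \<in> span (insert e S)\<close>
      unfolding u_def by (simp add: span_diff span_scale)
  qed
  have incr: "N (u (Suc j) - u j) \<le> v \<pi> ^ j * R" for j
  proof -
    have "u (Suc j) - u j = sc (\<pi> ^ j) (sc \<pi> (p (Suc j)) - p j - d j)"
      by (simp add: u_def D_def algebra_simps)
    then show ?thesis
      using d(2)[of j] v_\<pi>(1) by (simp add: N_scale v_power mult_left_mono)
  qed
  have "\<exists>z\<in>span S. \<forall>j. N (z - u j) \<le> v \<pi> ^ j * R"
    using v_\<pi> by (intro geometric_limit[OF W u incr]) simp_all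
  then obtain z where z: "z \<in> span S" "\<And>j. N (z - u j) \<le> v \<pi> ^ j * R"
    by blast
  have "e + z \<in> lineality X"
  proof (rule lineality_memI[OF X(1) ball subspace_span])
    show "e + z = sc (\<pi> ^ j) (p j) - D j + (z - u j)" for j
      by (simp add: u_def)
    show "z - u j \<in> span (insert e S)" for j
      using span_diff[OF z(1) u] span_mono[of S "insert e S"] by blast
  qed (use p(1) D z(2) in auto)
  moreover have "coord S e (e + z) = 1"
    using coord_eqI[OF e, of "e + z" 1] z(1) by simp
  ultimately show ?thesis
    by blast
qed

text \<open>Induction on the family: split off one basis vector \<open>y e\<close> and distinguish whether its
  coordinate is bounded on \<open>X\<close>.\<close>
lemma bounded_mod_lineality_if_contains_ball:
  assumes "finite J" "t_orthogonal \<tau> J y"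
    and "abs_convex v sc X" "X \<subseteq> span (y ` J)"
    and "0 < \<delta>" "\<And>x. x \<in> span (y ` J) \<Longrightarrow> N x < \<delta> \<Longrightarrow> x \<in> X"
  shows "bounded_mod_lineality X"
  using assms
proof (induct J arbitrary: X rule: finite_induct)
  case empty
  then have "X \<subseteq> {0}"
    by simp
  then show ?case
    using subspace_0[OF subspace_lineality[OF empty.prems(2)]]
    unfolding bounded_mod_lineality_def by (intro exI[of _ 0] ballI bexI[of _ 0]) auto
next
  case (insert e J)
  let ?S = "y ` J"
  have V: "span (y ` insert e J) = span (insert (y e) ?S)"
    by simp
  have e: "y e \<notin> span ?S"
    using t_orthogonal_notin_span[OF insert.hyps(1) insert.prems(1) insert.hyps(2)] .
  have X: "abs_convex v sc X" "X \<subseteq> span (insert (y e) ?S)"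
    using insert.prems(2,3) V by auto
  have IH: "bounded_mod_lineality (X \<inter> span ?S)"
  proof (rule insert.hyps(3))
    show "t_orthogonal \<tau> J y"
      using t_orthogonal_subset[OF insert.prems(1)] insert.hyps(1) by blast
    show "abs_convex v sc (X \<inter> span ?S)"
      using abs_convex_Int_subspace[OF X(1)] by simp
    show "x \<in> X \<inter> span ?S" if "x \<in> span ?S" "N x < \<delta>" for x
      using that insert.prems(5) span_mono[of ?S "y ` insert e J"] by blast
  qed (use insert.prems(4) in auto)
  show ?case
  proof (cases "bdd_above ((\<lambda>x. v (coord ?S (y e) x)) ` X)")
    case True
    then show ?thesis
      by (rule bounded_mod_lineality_insert_bounded_coord[OF X e _ IH])
  next
    case False
    have "complete_wrt N (span ?S)"
      using complete_wrt_span_t_orthogonal[OF insert.hyps(1) t_orthogonal_subset[OF insert.prems(1)]]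
        insert.hyps(1) by blast
    then obtain l where "l \<in> lineality X" "coord ?S (y e) l = 1"
      using lineality_vector_if_unbounded_coord[OF X e False _ insert.prems(4) _ IH] insert.prems(5) V
      by metis
    then show ?thesis
      using bounded_mod_lineality_insert_lineality_vector[OF X e _ _ IH] by blast
  qed
qed

lemma abs_convex_contains_ball:
  assumes "abs_convex v sc A" "finite I" "t_orthogonal \<tau> I y" "span (y ` I) = span A"
  shows "\<exists>\<delta>>0. \<forall>x\<in>span (y ` I). N x < \<delta> \<longrightarrow> x \<in> A"
proof -
  have "\<exists>k. sc (\<pi> ^ k) (y b) \<in> A" if "b \<in> I" for b
  proof -
    have "y b \<in> span A"
      using span_base[of "y b" "y ` I"] that assms(4) by auto
    then show ?thesis
      using abs_convex_absorbs_span[OF assms(1)] unfolding eventually_sequentially by blast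
  qed
  then obtain \<kappa> where \<kappa>: "\<And>b. b \<in> I \<Longrightarrow> sc (\<pi> ^ \<kappa> b) (y b) \<in> A"
    by metis
  have \<tau>: "0 < \<tau>"
    using t_orthogonal_pos[OF assms(3)] .
  define m where "m = Min (insert 1 ((\<lambda>b. v (\<pi> ^ \<kappa> b) * N (y b)) ` I))"
  have "finite (insert 1 ((\<lambda>b. v (\<pi> ^ \<kappa> b) * N (y b)) ` I))"
    using assms(2) by simp
  moreover have "0 < v (\<pi> ^ \<kappa> b) * N (y b)" if "b \<in> I" for b
    using v_pos[of "\<pi> ^ \<kappa> b"] \<pi>_nonzero N_pos[OF t_orthogonal_nonzero[OF assms(3) that]] by simp
  ultimately have m: "0 < m" "\<And>b. b \<in> I \<Longrightarrow> m \<le> v (\<pi> ^ \<kappa> b) * N (y b)"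
    unfolding m_def by (auto simp: Min_gr_iff)
  have "x \<in> A" if x: "x \<in> span (y ` I)" "N x < \<tau> * m" for x
  proof (rule t_orthogonal_span_mem_abs_convex[OF assms(1-3) x(1)])
    fix b
    assume "b \<in> I"
    have "\<tau> * m \<le> \<tau> * (v (\<pi> ^ \<kappa> b) * N (y b))"
      using m(2)[OF \<open>b \<in> I\<close>] \<tau> by simp
    then show "\<pi> ^ \<kappa> b \<noteq> 0 \<and> sc (\<pi> ^ \<kappa> b) (y b) \<in> A \<and> N x \<le> \<tau> * v (\<pi> ^ \<kappa> b) * N (y b)"
      using x(2) \<kappa>[OF \<open>b \<in> I\<close>] \<pi>_nonzero by (simp add: mult.assoc)
  qed
  then show ?thesis
    using m(1) \<tau> by (intro exI[of _ "\<tau> * m"]) auto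
qed

lemma compactoid_if_bounded:
  assumes "abs_convex v sc B" "finite I" "t_orthogonal \<tau> I y" "B \<subseteq> span (y ` I)"
    and "\<And>x. x \<in> B \<Longrightarrow> N x \<le> R"
  shows "compactoid v sc N B"
  unfolding compactoid_def
proof (intro conjI allI impI assms(1))
  fix U
  assume "zero_nhd N U"
  then have "0 \<in> U"
    unfolding zero_nhd_def by auto
  have "\<exists>\<mu>. \<mu> \<noteq> 0 \<and> R \<le> \<tau> * v \<mu> * N (y b)" if "b \<in> I" for b
  proof -
    have pos: "0 < \<tau> * N (y b)"
      using t_orthogonal_pos[OF assms(3)] N_pos[OF t_orthogonal_nonzero[OF assms(3) that]] by simp
    have "0 < max 1 (R / (\<tau> * N (y b)))"
      by (simp add: less_max_iff_disj)
    then obtain \<mu> where \<mu>: "max 1 (R / (\<tau> * N (y b))) \<le> v \<mu>"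
      using exists_scalar_between by blast
    then have "R \<le> v \<mu> * (\<tau> * N (y b))"
      using pos by (simp add: divide_le_eq)
    moreover have "\<mu> \<noteq> 0"
      using \<mu> by auto
    ultimately show ?thesis
      by (auto simp: mult_ac)
  qed
  then obtain \<mu> where \<mu>: "\<And>b. b \<in> I \<Longrightarrow> \<mu> b \<noteq> 0 \<and> R \<le> \<tau> * v (\<mu> b) * N (y b)"
    by metis
  define S where "S = (\<lambda>b. sc (\<mu> b) (y b)) ` I"
  have "x \<in> aco v sc S" if x: "x \<in> B" for x
  proof (rule t_orthogonal_span_mem_abs_convex[OF abs_convex_aco assms(2,3) subsetD[OF assms(4) x]])
    fix b
    assume "b \<in> I"
    have "sc (\<mu> b) (y b) \<in> aco v sc S"
      unfolding aco_def S_def using \<open>b \<in> I\<close> by (intro hull_inc) simp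
    then show "\<mu> b \<noteq> 0 \<and> sc (\<mu> b) (y b) \<in> aco v sc S \<and> N x \<le> \<tau> * v (\<mu> b) * N (y b)"
      using \<mu>[OF \<open>b \<in> I\<close>] assms(5)[OF x] by auto
  qed
  moreover have "aco v sc S \<subseteq> msum U (aco v sc S)"
    unfolding msum_def using \<open>0 \<in> U\<close> by force
  ultimately show "\<exists>S. finite S \<and> B \<subseteq> msum U (aco v sc S)"
    using assms(2) unfolding S_def by blast
qed

theorem local_compactoid_decomposition:
  assumes "local_compactoid v sc N A" "complete_wrt N (span A)"
  shows "\<exists>B D. compactoid v sc N B \<and> subspace D \<and> finite_type v sc N D \<and> A = msum B D"
proof -
  have A: "abs_convex v sc A"
    using assms(1) unfolding local_compactoid_def by blast
  obtain S where S: "finite S" "span A \<subseteq> span S"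
    using finite_span_if_local_compactoid[OF assms] by blast
  obtain I :: "'e set" and y \<tau> where y: "finite I" "t_orthogonal \<tau> I y" "span (y ` I) = span A"
    using exists_t_orthogonal_spanning[OF S] by blast
  have A_span: "A \<subseteq> span (y ` I)"
    using span_superset[of A] y(3) by simp
  obtain \<delta> where "0 < \<delta>" "\<And>x. x \<in> span (y ` I) \<Longrightarrow> N x < \<delta> \<Longrightarrow> x \<in> A"
    using abs_convex_contains_ball[OF A y] by blast
  then obtain R where R: "\<And>x. x \<in> A \<Longrightarrow> \<exists>d\<in>lineality A. N (x - d) \<le> R"
    using bounded_mod_lineality_if_contains_ball[OF y(1,2) A A_span] unfolding bounded_mod_lineality_def by blast
  have "0 \<le> R"
  proof -
    obtain d where "N (0 - d) \<le> R"
      using R[OF abs_convex_0[OF A]] by blast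
    then show ?thesis
      using N_nonneg[of "0 - d"] by linarith
  qed
  have "compactoid v sc N {x \<in> A. N x \<le> R}"
    using A_span by (intro compactoid_if_bounded[OF abs_convex_norm_le[OF A \<open>0 \<le> R\<close>] y(1,2)]) auto
  moreover have "lineality A \<subseteq> span S"
    using lineality_subset[of A] span_superset[of A] S(2) by blast
  then have "finite_type v sc N (lineality A)"
    by (intro finite_type_if_finite_span[OF subspace_lineality[OF A] S(1)])
  ultimately show ?thesis
    using subspace_lineality[OF A] msum_bounded_part_lineality[OF A R] by blast
qed

end

theorem mainTheorem12:
  fixes v :: "'k::field \<Rightarrow> real"
    and sc :: "'k \<Rightarrow> 'e::ab_group_add \<Rightarrow> 'e"
    and N :: "'e \<Rightarrow> real"
    and A :: "'e set"
  assumes "nonarch_abs v" and "nontrivial_abs v" and "complete_abs v"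
    and "vector_space sc"
    and "nonarch_norm v sc N"
    and "local_compactoid v sc N A"
    and "complete_wrt N (module.span sc A)"
  shows "\<exists>B D. compactoid v sc N B \<and> module.subspace sc D \<and>
           finite_type v sc N D \<and> A = msum B D"
proof -
  interpret nonarch_normed_space_complete_field sc v N
    using assms(1-5)
    by (intro nonarch_normed_space_complete_field.intro nonarch_normed_space.intro
        nonarch_normed_space_axioms.intro nonarch_normed_space_complete_field_axioms.intro)
  show ?thesis
    using local_compactoid_decomposition[OF assms(6,7)] .
qed

end
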